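(* Let $E$ be finite, $X_+=E^{\mathbb{Z}_+}$, $X_-=E^{-\mathbb{N}}$, $X=E^{\mathbb{Z}}$. Let $\phi:X_+\to\mathbb{R}$ be continuous and satisfy the extensibility condition, let $\nu$ be a half-line Gibbs measure for $\phi$, $\rho$ the uniform Bernoulli measure on $X_-$ and $\mu_0=\rho\times\nu$. Let $\mu$ be a weak$^*$ limit point of the sequence $\tilde\mu_n:=\frac1n\sum_{i=0}^{n-1}\mu_0\circ S^{-i}$. Then $\mu$ is a translation-invariant Gibbs measure for the whole-line specification $\overset{\rightleftharpoons}{\gamma}^{\phi}$.
   Context: $S$ is the left shift on $X_+$ and $X$, $S_n\phi=\sum_{k=0}^{n-1}\phi\circ S^k$; strings like $x_{-n}^{-1}ax_1^\infty$ are viewed as elements of $X_+$ by re-indexing their first coordinate as $0$. Extensibility condition: for all $a_0,b_0\in E$, $\sum_{i=0}^n(\phi(x_{-i}^{-1}b_0x_1^\infty)-\phi(x_{-i}^{-1}a_0x_1^\infty))$ converges uniformly in $x\in X$. Half-line Gibbs measure: a probability $\nu$ on $X_+$ with $\nu(x_0^{n-1}=a_0^{n-1}\mid x_n^\infty)=\exp(S_n\phi(a_0^{n-1}x_n^\infty))/\sum_{\bar a_0^{n-1}}\exp(S_n\phi(\bar a_0^{n-1}x_n^\infty))$ a.s. for all $n\ge1$. For extensible $\phi$, $\overset{\rightleftharpoons}{\gamma}^{\phi}$ is the unique translation-invariant quasilocal non-null specification on $X$ with single-site kernels $\overset{\rightleftharpoons}{\gamma}^{\phi}_{\{i\}}(\sigma_i|\omega_{\{i\}^c})=\lim_{p\to\infty}e^{S_{i+p+1}\phi(\omega_{-p}^{i-1}\sigma_i\omega_{i+1}^\infty)}/\sum_{\bar\omega_i}e^{S_{i+p+1}\phi(\omega_{-p}^{i-1}\bar\omega_i\omega_{i+1}^\infty)}$;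 $\mu$ is Gibbs for it iff for each $i$ the conditional law of $x_i$ given $x_{\{i\}^c}$ under $\mu$ is $\overset{\rightleftharpoons}{\gamma}^{\phi}_{\{i\}}$ a.s. Translation-invariant means $\mu\circ S^{-1}=\mu$. *)

theory Defs
  imports "HOL-Probability.Probability"
begin

text \<open>X_- = E^{-N} is coded as nat => 'e,
  coordinate j standing for site -(j+1).\<close>

definition Xp :: "(nat \<Rightarrow> 'e) measure" where
  "Xp = PiM UNIV (\<lambda>_. count_space UNIV)"

definition Xz :: "(int \<Rightarrow> 'e) measure" where
  "Xz = PiM UNIV (\<lambda>_. count_space UNIV)"

definition Xp_top :: "(nat \<Rightarrow> 'e) topology" where
  "Xp_top = product_topology (\<lambda>_. discrete_topology UNIV) UNIV"

definition Xz_top :: "(int \<Rightarrow> 'e) topology" where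
  "Xz_top = product_topology (\<lambda>_. discrete_topology UNIV) UNIV"

definition shiftp :: "(nat \<Rightarrow> 'e) \<Rightarrow> nat \<Rightarrow> 'e" where
  "shiftp x = (\<lambda>i. x (Suc i))"

definition shiftz :: "(int \<Rightarrow> 'e) \<Rightarrow> int \<Rightarrow> 'e" where
  "shiftz x = (\<lambda>i. x (i + 1))"

definition birkhoff_sum :: "((nat \<Rightarrow> 'e) \<Rightarrow> real) \<Rightarrow> nat \<Rightarrow> (nat \<Rightarrow> 'e) \<Rightarrow> real" where
  "birkhoff_sum \<phi> n x = (\<Sum>k<n. \<phi> ((shiftp ^^ k) x))"

definition prefix_concat :: "nat \<Rightarrow> (nat \<Rightarrow> 'e) \<Rightarrow> (nat \<Rightarrow> 'e) \<Rightarrow> nat \<Rightarrow> 'e" where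
  "prefix_concat n a x = (\<lambda>i. if i < n then a i else x i)"

text \<open>x_{-i}^{-1} b x_1^\<infinity>, re-indexed so that its first coordinate (site -i) is 0.\<close>
definition past_window :: "(int \<Rightarrow> 'e) \<Rightarrow> nat \<Rightarrow> 'e \<Rightarrow> nat \<Rightarrow> 'e" where
  "past_window x i b = (\<lambda>j. if int j = int i then b else x (int j - int i))"

definition extensible :: "((nat \<Rightarrow> 'e) \<Rightarrow> real) \<Rightarrow> bool" where
  "extensible \<phi> \<longleftrightarrow> (\<forall>a0 b0. uniformly_convergent_on UNIV
      (\<lambda>n x. \<Sum>i\<le>n. \<phi> (past_window x i b0) - \<phi> (past_window x i a0)))"

definition tail_algebra :: "nat \<Rightarrow> (nat \<Rightarrow> 'e) measure" where
  "tail_algebra n = vimage_algebra (space Xp) (\<lambda>x. restrict x {n..})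
                      (PiM {n..} (\<lambda>_. count_space UNIV))"

definition half_line_gibbs :: "((nat \<Rightarrow> 'e::finite) \<Rightarrow> real) \<Rightarrow> (nat \<Rightarrow> 'e) measure \<Rightarrow> bool" where
  "half_line_gibbs \<phi> \<nu> \<longleftrightarrow> prob_space \<nu> \<and> sets \<nu> = sets Xp \<and>
     (\<forall>n\<ge>1. \<forall>a. AE x in \<nu>.
        real_cond_exp \<nu> (restr_to_subalg \<nu> (tail_algebra n)) (indicator {y. \<forall>i<n. y i = a i}) x
        = exp (birkhoff_sum \<phi> n (prefix_concat n a x)) /
          (\<Sum>a'\<in>PiE {..<n} (\<lambda>_. UNIV). exp (birkhoff_sum \<phi> n (prefix_concat n a' x))))"

definition rho :: "(nat \<Rightarrow> 'e::finite) measure" where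
  "rho = PiM UNIV (\<lambda>_. uniform_count_measure UNIV)"

definition glue :: "(nat \<Rightarrow> 'e) \<times> (nat \<Rightarrow> 'e) \<Rightarrow> int \<Rightarrow> 'e" where
  "glue = (\<lambda>(w, x) i. if i < 0 then w (nat (- i - 1)) else x (nat i))"

definition mu0 :: "(nat \<Rightarrow> 'e::finite) measure \<Rightarrow> (int \<Rightarrow> 'e) measure" where
  "mu0 \<nu> = distr (rho \<Otimes>\<^sub>M \<nu>) Xz glue"

text \<open>omega_{-p}^\<infinity>, re-indexed so that site -p becomes 0.\<close>
definition window :: "(int \<Rightarrow> 'e) \<Rightarrow> nat \<Rightarrow> nat \<Rightarrow> 'e" where
  "window w p = (\<lambda>j. w (int j - int p))"

definition gamma_kernel :: "((nat \<Rightarrow> 'e::finite) \<Rightarrow> real) \<Rightarrow> int \<Rightarrow> 'e \<Rightarrow> (int \<Rightarrow> 'e) \<Rightarrow> real" where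
  "gamma_kernel \<phi> i \<sigma> w = lim (\<lambda>p::nat.
      exp (birkhoff_sum \<phi> (nat (i + int p + 1)) (window (w(i := \<sigma>)) p)) /
      (\<Sum>\<tau>\<in>UNIV. exp (birkhoff_sum \<phi> (nat (i + int p + 1)) (window (w(i := \<tau>)) p))))"

definition site_compl_algebra :: "int \<Rightarrow> (int \<Rightarrow> 'e) measure" where
  "site_compl_algebra i = vimage_algebra (space Xz) (\<lambda>x. restrict x (- {i}))
                      (PiM (- {i}) (\<lambda>_. count_space UNIV))"

definition gibbs_whole_line :: "((nat \<Rightarrow> 'e::finite) \<Rightarrow> real) \<Rightarrow> (int \<Rightarrow> 'e) measure \<Rightarrow> bool" where
  "gibbs_whole_line \<phi> \<mu> \<longleftrightarrow> prob_space \<mu> \<and> sets \<mu> = sets Xz \<and>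
     (\<forall>i \<sigma>. AE w in \<mu>.
        real_cond_exp \<mu> (restr_to_subalg \<mu> (site_compl_algebra i)) (indicator {x. x i = \<sigma>}) w
        = gamma_kernel \<phi> i \<sigma> w)"

definition translation_invariant :: "(int \<Rightarrow> 'e) measure \<Rightarrow> bool" where
  "translation_invariant \<mu> \<longleftrightarrow> distr \<mu> Xz shiftz = \<mu>"

definition weak_star_limit_point_avg :: "(int \<Rightarrow> 'e) measure \<Rightarrow> (int \<Rightarrow> 'e) measure \<Rightarrow> bool" where
  "weak_star_limit_point_avg \<mu> \<mu>\<^sub>0 \<longleftrightarrow> prob_space \<mu> \<and> sets \<mu> = sets Xz \<and>
     (\<exists>r. strict_mono r \<and> (\<forall>f. continuous_map Xz_top euclideanreal f \<longrightarrow>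
        (\<lambda>k. (1 / real (r k)) * (\<Sum>i<r k. integral\<^sup>L (distr \<mu>\<^sub>0 Xz (shiftz ^^ i)) f))
          \<longlonglongrightarrow> integral\<^sup>L \<mu> f))"

end

theory Submission
  imports Defs
begin

text \<open>Under \<open>\<mu>\<^sub>0 \<circ> S\<^sup>-\<^sup>i\<close> the sites \<open>\<ge> -i\<close> are distributed as \<open>\<nu>\<close>. So for a site \<open>j\<close> and a
  cylinder event \<open>A\<close> avoiding \<open>j\<close>, both to the right of \<open>-i\<close>, the half-line Gibbs property of \<open>\<nu>\<close>
  gives \<open>\<integral> 1\<^sub>A 1[w j = \<sigma>] = \<integral> 1\<^sub>A \<gamma>\<^sub>i\<close> exactly, where \<open>\<gamma>\<^sub>i\<close> is the single-site kernel computed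
  from the sites \<open>\<ge> -i\<close> only. Extensibility makes \<open>\<gamma>\<^sub>i\<close> converge uniformly to the whole-line
  kernel \<open>\<gamma>\<close>, which is therefore continuous. With \<open>\<gamma>\<close> in place of \<open>\<gamma>\<^sub>i\<close> the two sides thus
  differ by \<open>o(1)\<close> as \<open>i \<rightarrow> \<infinity>\<close>, their Cesaro means have the same limit, and since both
  integrands are continuous the identity passes to the weak-* limit point \<open>\<mu>\<close>. Dynkin's
  \<open>\<pi>\<close>-\<open>\<lambda>\<close> argument extends it from cylinders to the \<open>\<sigma>\<close>-algebra of the sites other than \<open>j\<close>,
  which is the DLR equation. Translation invariance is simpler: the Cesaro means of \<open>f \<circ> S\<close> and
  of \<open>f\<close> differ by a telescoping term of order \<open>1/n\<close>.\<close>

lemma softmax_pos: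
  fixes f :: "'a \<Rightarrow> real"
  assumes "finite A" "a \<in> A"
  shows "0 < exp (f a) / (\<Sum>b\<in>A. exp (f b))"
  using assms by (intro divide_pos_pos sum_pos) auto

lemma softmax_le_1:
  fixes f :: "'a \<Rightarrow> real"
  assumes "finite A" "a \<in> A"
  shows "exp (f a) / (\<Sum>b\<in>A. exp (f b)) \<le> 1"
proof -
  have "exp (f a) \<le> (\<Sum>b\<in>A. exp (f b))" using assms by (intro member_le_sum) auto
  moreover have "0 < (\<Sum>b\<in>A. exp (f b))" using assms by (intro sum_pos) auto
  ultimately show ?thesis by simp
qed

lemma abs_mult_le_if_le_1:
  fixes u v :: real
  assumes "\<bar>u\<bar> \<le> B" "0 \<le> v" "v \<le> 1"
  shows "\<bar>u * v\<bar> \<le> B"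
proof -
  have "\<bar>u * v\<bar> = \<bar>u\<bar> * v" using assms(2) by (simp add: abs_mult)
  also have "\<dots> \<le> \<bar>u\<bar>" using assms(3) by (simp add: mult_left_le)
  finally show ?thesis using assms(1) by simp
qed

lemma cesaro_mean_tendsto_0:
  fixes a :: "nat \<Rightarrow> real"
  assumes "a \<longlonglongrightarrow> 0"
  shows "(\<lambda>n. (1 / real n) * (\<Sum>i<n. a i)) \<longlonglongrightarrow> 0"
proof (rule LIMSEQ_I)
  fix e :: real assume "e > 0"
  then obtain N where N: "\<And>i. i \<ge> N \<Longrightarrow> \<bar>a i\<bar> < e / 2"
    using LIMSEQ_D[OF assms, of "e / 2"] by auto
  define C where "C = (\<Sum>i<N. \<bar>a i\<bar>)"
  obtain M :: nat where M: "M > 2 * C / e" using reals_Archimedean2 by blast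
  show "\<exists>no. \<forall>n\<ge>no. norm ((1 / real n) * (\<Sum>i<n. a i) - 0) < e"
  proof (intro exI allI impI)
    fix n assume n: "n \<ge> N + M + 1"
    have "(\<Sum>i<n. a i) = (\<Sum>i<N. a i) + (\<Sum>i\<in>{N..<n}. a i)"
      using sum.atLeastLessThan_concat[of 0 N n a] n by (simp add: atLeast0LessThan)
    moreover have "\<bar>\<Sum>i<N. a i\<bar> \<le> C" unfolding C_def by (rule sum_abs)
    moreover have "\<bar>\<Sum>i\<in>{N..<n}. a i\<bar> \<le> real n * (e / 2)"
    proof -
      have "\<bar>\<Sum>i\<in>{N..<n}. a i\<bar> \<le> (\<Sum>i\<in>{N..<n}. e / 2)"
        using N by (intro order.trans[OF sum_abs] sum_mono) (auto intro: less_imp_le)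
      also have "\<dots> \<le> real n * (e / 2)" using \<open>e > 0\<close> by simp
      finally show ?thesis .
    qed
    moreover have "C < real n * (e / 2)"
    proof -
      have "real M \<le> real n" using n by simp
      then have "2 * C / e < real n" using M by linarith
      then show ?thesis using \<open>e > 0\<close> by (simp add: field_simps)
    qed
    ultimately have "\<bar>\<Sum>i<n. a i\<bar> < real n * e" by linarith
    then show "norm ((1 / real n) * (\<Sum>i<n. a i) - 0) < e"
      using n by (simp add: abs_mult field_simps)
  qed
qed

lemma subalgebra_restr_to_subalg:
  assumes "subalgebra M F"
  shows "subalgebra M (restr_to_subalg M F)"
  using assms sets_restr_to_subalg[OF assms] unfolding subalgebra_def
  by (simp add: space_restr_to_subalg)

lemma (in sigma_finite_measure) distr_pair_snd:
  assumes "prob_space N"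
  shows "distr (N \<Otimes>\<^sub>M M) M snd = M"
proof (intro measure_eqI)
  fix A assume A: "A \<in> sets (distr (N \<Otimes>\<^sub>M M) M snd)"
  then have "emeasure (distr (N \<Otimes>\<^sub>M M) M snd) A = emeasure (N \<Otimes>\<^sub>M M) (space N \<times> A)"
    by (auto simp: emeasure_distr space_pair_measure dest: sets.sets_into_space
        intro!: arg_cong2[where f = emeasure])
  with A show "emeasure (distr (N \<Otimes>\<^sub>M M) M snd) A = emeasure M A"
    by (simp add: emeasure_pair_measure_Times prob_space.emeasure_space_1[OF assms])
qed simp

lemma (in prob_space) abs_integral_diff_le:
  fixes f g :: "'a \<Rightarrow> real"
  assumes "integrable M f" "integrable M g" "\<And>x. \<bar>f x - g x\<bar> \<le> e"
  shows "\<bar>integral\<^sup>L M f - integral\<^sup>L M g\<bar> \<le> e"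
proof -
  have "\<bar>integral\<^sup>L M f - integral\<^sup>L M g\<bar> = \<bar>\<integral>x. f x - g x \<partial>M\<bar>"
    using assms(1,2) by simp
  also have "\<dots> \<le> (\<integral>x. \<bar>f x - g x\<bar> \<partial>M)" by (rule integral_abs_bound)
  also have "\<dots> \<le> e" using assms by (intro integral_le_const) auto
  finally show ?thesis .
qed

lemma set_integral_eq_sigma_sets:
  fixes f g :: "'a \<Rightarrow> real"
  assumes f: "integrable M f" and g: "integrable M g"
    and G: "Int_stable G" "G \<subseteq> Pow (space M)" "sigma_sets (space M) G \<subseteq> sets M"
    and eq: "\<And>A. A \<in> G \<Longrightarrow> (LINT x:A|M. f x) = (LINT x:A|M. g x)"
    and total: "(\<integral>x. f x \<partial>M) = (\<integral>x. g x \<partial>M)"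
    and A: "A \<in> sigma_sets (space M) G"
  shows "(LINT x:A|M. f x) = (LINT x:A|M. g x)"
  using G(1,2) A
proof (induction rule: sigma_sets_induct_disjoint)
  case (basic A)
  then show ?case by (rule eq)
next
  case empty
  then show ?case by (simp add: set_lebesgue_integral_def)
next
  case (compl S)
  have S: "S \<in> sets M" using compl(1) G(3) by blast
  have complement: "(LINT x:(space M - S)|M. h x) = (\<integral>x. h x \<partial>M) - (LINT x:S|M. h x)"
    if "integrable M h" for h :: "'a \<Rightarrow> real"
  proof -
    have "space M - S \<in> sets M" using S by auto
    then have "set_integrable M (space M - S) h" "set_integrable M S h"
      unfolding set_integrable_def using S that by (blast intro: integrable_mult_indicator)+
    then have "(LINT x:(space M - S) \<union> S|M. h x) = (LINT x:(space M - S)|M. h x) + (LINT x:S|M. h x)"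
      by (intro set_integral_Un) auto
    moreover have "(space M - S) \<union> S = space M" using S sets.sets_into_space by blast
    ultimately show ?thesis using set_integral_space[OF that] by simp
  qed
  show ?case using complement[OF f] complement[OF g] total compl(2) by simp
next
  case (union F)
  have F: "F i \<in> sets M" for i using union(2) G(3) by blast
  have disjoint: "i \<noteq> k \<Longrightarrow> F i \<inter> F k = {}" for i k
    using union(1) by (auto simp: disjoint_family_on_def)
  have UF: "(\<Union>i. F i) \<in> sets M" using F by blast
  have "set_integrable M (\<Union>i. F i) f" "set_integrable M (\<Union>i. F i) g"
    unfolding set_integrable_def using UF f g by (blast intro: integrable_mult_indicator)+
  then show ?case
    using union(3) by (simp add: lebesgue_integral_countable_add[OF F disjoint])
qed

section \<open>Configuration spaces\<close>

lemma space_Xz [simp]: "space (Xz :: (int \<Rightarrow> 'e) measure) = UNIV"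
  by (simp add: Xz_def space_PiM)

lemma topspace_Xz_top [simp]: "topspace (Xz_top :: (int \<Rightarrow> 'e) topology) = UNIV"
  by (simp add: Xz_top_def)

lemma cylinder_in_sets_PiM:
  assumes "finite D"
  shows "{x. \<forall>i\<in>D. x i \<in> U i} \<in> sets (PiM UNIV (\<lambda>_::'i. count_space (UNIV :: 'e set)))"
proof -
  have [measurable]:
    "Measurable.pred (PiM UNIV (\<lambda>_::'i. count_space (UNIV :: 'e set))) (\<lambda>x. x i \<in> U i)" for i
    by (rule pred_sets2[where N="count_space UNIV"]) auto
  have "{x. \<forall>i\<in>D. x i \<in> U i} =
      {x \<in> space (PiM UNIV (\<lambda>_::'i. count_space (UNIV :: 'e set))). \<forall>i\<in>D. x i \<in> U i}"
    by (simp add: space_PiM)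
  also have "\<dots> \<in> sets (PiM UNIV (\<lambda>_::'i. count_space (UNIV :: 'e set)))"
    using assms by measurable
  finally show ?thesis .
qed

lemma countable_finite_support:
  "countable {U :: 'i::countable \<Rightarrow> 'e::finite set. finite {i. U i \<noteq> UNIV}}"
proof -
  let ?ext = "\<lambda>D (f :: 'i \<Rightarrow> 'e set) i. if i \<in> D then f i else UNIV"
  have "{U :: 'i \<Rightarrow> 'e set. finite {i. U i \<noteq> UNIV}} \<subseteq>
      (\<Union>D\<in>Collect finite. ?ext D ` PiE D (\<lambda>_. UNIV))"
  proof
    fix U :: "'i \<Rightarrow> 'e set" assume fin: "U \<in> {U. finite {i. U i \<noteq> UNIV}}"
    let ?D = "{i. U i \<noteq> UNIV}"
    have "U = ?ext ?D (restrict U ?D)"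
    proof
      fix i show "U i = ?ext ?D (restrict U ?D) i" by (cases "U i = UNIV") simp_all
    qed
    moreover have "restrict U ?D \<in> PiE ?D (\<lambda>_. UNIV)" by simp
    ultimately have "U \<in> ?ext ?D ` PiE ?D (\<lambda>_. UNIV)" by (rule image_eqI)
    with fin show "U \<in> (\<Union>D\<in>Collect finite. ?ext D ` PiE D (\<lambda>_. UNIV))" by blast
  qed
  moreover have "countable (\<Union>D\<in>Collect finite. ?ext D ` PiE D (\<lambda>_. UNIV :: 'e set set))"
    by (intro countable_UN[OF countable_Collect_finite] countable_finite finite_imageI finite_PiE) auto
  ultimately show ?thesis by (rule countable_subset)
qed

text \<open>Open sets of the product are countable unions of cylinders.\<close>

lemma borel_measurable_continuous_map_discrete_product:
  fixes f :: "('i::countable \<Rightarrow> 'e::finite) \<Rightarrow> real"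
  assumes "continuous_map (product_topology (\<lambda>_. discrete_topology UNIV) UNIV) euclideanreal f"
  shows "f \<in> borel_measurable (PiM UNIV (\<lambda>_. count_space UNIV))"
proof (rule borel_measurableI)
  fix S :: "real set" assume "open S"
  let ?M = "PiM UNIV (\<lambda>_::'i. count_space (UNIV :: 'e set))"
  define \<U> where "\<U> = {U :: 'i \<Rightarrow> 'e set. finite {i. U i \<noteq> UNIV} \<and> Pi\<^sub>E UNIV U \<subseteq> f -` S}"
  have "openin (product_topology (\<lambda>_. discrete_topology UNIV) UNIV) (f -` S)"
    using assms \<open>open S\<close> unfolding continuous_map_def by (auto simp: vimage_def)
  then have cover: "f -` S = (\<Union>U\<in>\<U>. Pi\<^sub>E UNIV U)"
  proof (intro equalityI subsetI)
    fix x assume "openin (product_topology (\<lambda>_. discrete_topology UNIV) UNIV) (f -` S)" "x \<in> f -` S"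
    then obtain U where "finite {i \<in> UNIV. U i \<noteq> topspace (discrete_topology UNIV)}"
      and "x \<in> Pi\<^sub>E UNIV U" and "Pi\<^sub>E UNIV U \<subseteq> f -` S"
      unfolding openin_product_topology_alt by blast
    then show "x \<in> (\<Union>U\<in>\<U>. Pi\<^sub>E UNIV U)" unfolding \<U>_def by auto
  qed (auto simp: \<U>_def)
  have "countable \<U>"
    by (rule countable_subset[OF _ countable_finite_support]) (auto simp: \<U>_def)
  moreover have "Pi\<^sub>E UNIV U \<in> sets ?M" if "U \<in> \<U>" for U
  proof -
    have "Pi\<^sub>E UNIV U = {x. \<forall>i\<in>{i. U i \<noteq> UNIV}. x i \<in> U i}" by (auto simp: PiE_iff)
    then show ?thesis
      using that cylinder_in_sets_PiM[of "{i. U i \<noteq> UNIV}" U] by (simp add: \<U>_def)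
  qed
  ultimately have "(\<Union>U\<in>\<U>. Pi\<^sub>E UNIV U) \<in> sets ?M" by blast
  then show "f -` S \<inter> space ?M \<in> sets ?M" by (simp add: cover space_PiM)
qed

lemma borel_measurable_Xz_continuous:
  "continuous_map Xz_top euclideanreal f \<Longrightarrow> f \<in> borel_measurable (Xz :: (int \<Rightarrow> 'e::finite) measure)"
  unfolding Xz_top_def Xz_def by (rule borel_measurable_continuous_map_discrete_product)

lemma borel_measurable_Xp_continuous:
  "continuous_map Xp_top euclideanreal f \<Longrightarrow> f \<in> borel_measurable (Xp :: (nat \<Rightarrow> 'e::finite) measure)"
  unfolding Xp_top_def Xp_def by (rule borel_measurable_continuous_map_discrete_product)

lemma integrable_continuous_map_Xz:
  fixes f :: "(int \<Rightarrow> 'e::finite) \<Rightarrow> real"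
  assumes "finite_measure \<mu>" and "sets \<mu> = sets Xz"
    and "continuous_map Xz_top euclideanreal f" and "\<And>w. \<bar>f w\<bar> \<le> B"
  shows "integrable \<mu> f"
proof (rule finite_measure.integrable_const_bound[OF assms(1), where B = B])
  show "AE w in \<mu>. norm (f w) \<le> B" using assms(4) by (intro AE_I2) simp
  show "f \<in> borel_measurable \<mu>"
    unfolding measurable_cong_sets[OF assms(2) refl] by (rule borel_measurable_Xz_continuous[OF assms(3)])
qed

lemma sets_Xz_eq_sigma_prod_algebra:
  "sets (Xz :: (int \<Rightarrow> 'e) measure) = sigma_sets UNIV (prod_algebra UNIV (\<lambda>_. count_space UNIV))"
  unfolding Xz_def sets_PiM by simp

lemma prod_emb_PiE_count_space:
  assumes "J \<subseteq> I"
  shows "prod_emb I (\<lambda>_. count_space UNIV) J (PiE J E) = {x \<in> PiE I (\<lambda>_. UNIV). \<forall>t\<in>J. x t \<in> E t}"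
  using assms by (auto simp: prod_emb_def PiE_iff extensional_def)

lemma UNIV_in_prod_algebra: "UNIV \<in> prod_algebra (UNIV :: int set) (\<lambda>_. count_space (UNIV :: 'e set))"
proof -
  have "prod_emb UNIV (\<lambda>_. count_space (UNIV :: 'e set)) {0::int} (PiE {0} (\<lambda>_. UNIV))
      \<in> prod_algebra UNIV (\<lambda>_. count_space (UNIV :: 'e set))"
    by (rule prod_algebraI) auto
  moreover have "prod_emb UNIV (\<lambda>_. count_space (UNIV :: 'e set)) {0::int} (PiE {0} (\<lambda>_. UNIV)) = UNIV"
    by (subst prod_emb_PiE_count_space) auto
  ultimately show ?thesis by simp
qed

lemma cylinder_in_sets_Xz:
  "finite J \<Longrightarrow> {x. \<forall>t\<in>J. x t \<in> V t} \<in> sets (Xz :: (int \<Rightarrow> 'e) measure)"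
  unfolding Xz_def by (rule cylinder_in_sets_PiM)

lemma cylinder_in_sets_Xp: "{y. \<forall>i<n. y i = a i} \<in> sets (Xp :: (nat \<Rightarrow> 'e) measure)"
proof -
  have "{y. \<forall>i<n. y i = a i} = {y. \<forall>i\<in>{..<n}. y i \<in> {a i}}" by auto
  then show ?thesis using cylinder_in_sets_PiM[of "{..<n}" "\<lambda>i. {a i}"] unfolding Xp_def by simp
qed

lemma site_in_sets_Xz: "{w. w j = \<sigma>} \<in> sets (Xz :: (int \<Rightarrow> 'e) measure)"
  using cylinder_in_sets_Xz[of "{j}" "\<lambda>_. {\<sigma>}"] by simp

lemma measurable_PiM_componentwise:
  assumes "\<And>k. (\<lambda>w. h w k) \<in> measurable N (count_space UNIV)"
  shows "h \<in> measurable N (PiM UNIV (\<lambda>_. count_space UNIV))"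
  using measurable_PiM_single'[of UNIV "\<lambda>k w. h w k" N "\<lambda>_. count_space UNIV"] assms
  by (simp add: space_PiM)

lemma measurable_Xz_componentwise:
  "(\<And>k. (\<lambda>w. h w k) \<in> measurable N (count_space UNIV)) \<Longrightarrow> h \<in> measurable N Xz"
  unfolding Xz_def by (rule measurable_PiM_componentwise)

lemma measurable_Xp_componentwise:
  "(\<And>k. (\<lambda>w. h w k) \<in> measurable N (count_space UNIV)) \<Longrightarrow> h \<in> measurable N Xp"
  unfolding Xp_def by (rule measurable_PiM_componentwise)

lemma measurable_Xz_component: "(\<lambda>x. x t) \<in> measurable Xz (count_space UNIV)"
  unfolding Xz_def by (rule measurable_component_singleton) simp

lemma measurable_Xp_component: "(\<lambda>x. x t) \<in> measurable Xp (count_space UNIV)"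
  unfolding Xp_def by (rule measurable_component_singleton) simp

lemma continuous_map_Xz_component: "continuous_map Xz_top (discrete_topology UNIV) (\<lambda>x. x t)"
  unfolding Xz_top_def by (rule continuous_map_product_projection) simp

lemma continuous_map_Xp_component: "continuous_map Xp_top (discrete_topology UNIV) (\<lambda>x. x t)"
  unfolding Xp_top_def by (rule continuous_map_product_projection) simp

lemma continuous_map_into_Xz:
  "(\<And>k. continuous_map X (discrete_topology UNIV) (\<lambda>w. h w k)) \<Longrightarrow> continuous_map X Xz_top h"
  unfolding Xz_top_def continuous_map_componentwise_UNIV by simp

lemma continuous_map_into_Xp:
  "(\<And>k. continuous_map X (discrete_topology UNIV) (\<lambda>w. h w k)) \<Longrightarrow> continuous_map X Xp_top h"
  unfolding Xp_top_def continuous_map_componentwise_UNIV by simp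

lemma continuous_map_indicator_cylinder_Xz:
  assumes "finite J"
  shows "continuous_map Xz_top euclideanreal (indicator {x. \<forall>t\<in>J. x t \<in> V t} :: _ \<Rightarrow> real)"
proof -
  have "indicator {x. \<forall>t\<in>J. x t \<in> V t} = (\<lambda>x. \<Prod>t\<in>J. indicator (V t) (x t) :: real)"
    using assms by (induction J rule: finite_induct) (auto simp: indicator_def fun_eq_iff)
  moreover have "continuous_map Xz_top euclideanreal (\<lambda>x. \<Prod>t\<in>J. indicator (V t) (x t) :: real)"
    using assms
  proof (intro continuous_map_prod)
    fix t
    have "continuous_map Xz_top euclideanreal (indicator (V t) \<circ> (\<lambda>x. x t) :: _ \<Rightarrow> real)"
      by (rule continuous_map_compose[OF continuous_map_Xz_component]) simp
    then show "continuous_map Xz_top euclideanreal (\<lambda>x. indicator (V t) (x t) :: real)"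
      by (simp add: o_def)
  qed
  ultimately show ?thesis by simp
qed

lemma continuous_map_indicator_site_Xz:
  "continuous_map Xz_top euclideanreal (indicator {w. w j = \<sigma>} :: (int \<Rightarrow> 'e) \<Rightarrow> real)"
  using continuous_map_indicator_cylinder_Xz[of "{j}" "\<lambda>_. {\<sigma>}"] by simp

lemma shiftz_pow: "(shiftz ^^ k) w = (\<lambda>t. w (t + int k))"
  by (induction k arbitrary: w) (auto simp: shiftz_def add.assoc)

lemma shiftp_pow: "(shiftp ^^ k) x = (\<lambda>t. x (t + k))"
  by (induction k arbitrary: x) (auto simp: shiftp_def)

lemma measurable_shiftz_pow: "(shiftz ^^ k) \<in> measurable Xz Xz"
  unfolding shiftz_pow[abs_def] by (intro measurable_Xz_componentwise measurable_Xz_component)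

lemma measurable_shiftz: "shiftz \<in> measurable Xz Xz"
  using measurable_shiftz_pow[of 1] by simp

lemma continuous_map_shiftz: "continuous_map Xz_top Xz_top shiftz"
  unfolding shiftz_def by (intro continuous_map_into_Xz continuous_map_Xz_component)

lemma continuous_map_shiftp_pow: "continuous_map Xp_top Xp_top (shiftp ^^ k)"
  unfolding shiftp_pow[abs_def] by (intro continuous_map_into_Xp continuous_map_Xp_component)

lemma continuous_map_birkhoff_sum:
  assumes \<phi>: "continuous_map Xp_top euclideanreal \<phi>"
    and h: "continuous_map X Xp_top h"
  shows "continuous_map X euclideanreal (\<lambda>w. birkhoff_sum \<phi> n (h w))"
  unfolding birkhoff_sum_def
proof (intro continuous_map_sum)
  fix k
  have "continuous_map X euclideanreal (\<phi> \<circ> ((shiftp ^^ k) \<circ> h))"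
    by (intro continuous_map_compose[OF _ \<phi>] continuous_map_compose[OF h continuous_map_shiftp_pow])
  then show "continuous_map X euclideanreal (\<lambda>w. \<phi> ((shiftp ^^ k) (h w)))" by (simp add: o_def)
qed simp

lemma continuous_map_exp_birkhoff_sum:
  assumes "continuous_map Xp_top euclideanreal \<phi>" and "continuous_map X Xp_top h"
  shows "continuous_map X euclideanreal (\<lambda>w. exp (birkhoff_sum \<phi> n (h w)))"
proof -
  have "continuous_map X euclideanreal (exp \<circ> (\<lambda>w. birkhoff_sum \<phi> n (h w)))"
    by (rule continuous_map_compose[OF continuous_map_birkhoff_sum[OF assms]])
      (simp add: continuous_on_exp)
  then show ?thesis by (simp add: o_def)
qed

lemma continuous_map_window_fun_upd: "continuous_map Xz_top Xp_top (\<lambda>w. window (w(j := \<tau>)) p)"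
proof (rule continuous_map_into_Xp)
  fix k
  show "continuous_map Xz_top (discrete_topology UNIV) (\<lambda>w. window (w(j := \<tau>)) p k)"
    by (cases "int k - int p = j") (simp_all add: window_def continuous_map_Xz_component)
qed

section \<open>The single-site kernel\<close>

definition gamma_approx :: "((nat \<Rightarrow> 'e::finite) \<Rightarrow> real) \<Rightarrow> int \<Rightarrow> 'e \<Rightarrow> nat \<Rightarrow> (int \<Rightarrow> 'e) \<Rightarrow> real"
  where "gamma_approx \<phi> i \<sigma> p w =
    exp (birkhoff_sum \<phi> (nat (i + int p + 1)) (window (w(i := \<sigma>)) p)) /
    (\<Sum>\<tau>\<in>UNIV. exp (birkhoff_sum \<phi> (nat (i + int p + 1)) (window (w(i := \<tau>)) p)))"

lemma gamma_kernel_eq_lim: "gamma_kernel \<phi> i \<sigma> w = lim (\<lambda>p. gamma_approx \<phi> i \<sigma> p w)"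
  unfolding gamma_kernel_def gamma_approx_def ..

lemma gamma_approx_pos: "0 < gamma_approx \<phi> i \<sigma> p w"
  unfolding gamma_approx_def by (rule softmax_pos) simp_all

lemma gamma_approx_le_1: "gamma_approx \<phi> i \<sigma> p w \<le> 1"
  unfolding gamma_approx_def by (rule softmax_le_1) simp_all

lemma continuous_map_gamma_approx:
  assumes "continuous_map Xp_top euclideanreal \<phi>"
  shows "continuous_map Xz_top euclideanreal (gamma_approx \<phi> i \<sigma> p)"
  unfolding gamma_approx_def[abs_def]
  by (intro continuous_map_real_divide continuous_map_sum
      continuous_map_exp_birkhoff_sum[OF assms continuous_map_window_fun_upd])
    (simp_all add: sum_nonneg_eq_0_iff)

text \<open>Extensibility says exactly that these relative energies converge uniformly in \<open>x\<close>.\<close>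

definition relative_energy :: "((nat \<Rightarrow> 'e) \<Rightarrow> real) \<Rightarrow> 'e \<Rightarrow> nat \<Rightarrow> (int \<Rightarrow> 'e) \<Rightarrow> 'e \<Rightarrow> real"
  where "relative_energy \<phi> \<sigma> n x \<tau> = (\<Sum>i\<le>n. \<phi> (past_window x i \<tau>) - \<phi> (past_window x i \<sigma>))"

lemma relative_energy_self [simp]: "relative_energy \<phi> \<sigma> n x \<sigma> = 0"
  by (simp add: relative_energy_def)

text \<open>For \<open>v \<sigma> = 0\<close> this is the probability of \<open>\<sigma>\<close> under the weights \<open>exp (v \<tau>)\<close>.\<close>

definition boltzmann_weight :: "('e::finite \<Rightarrow> real) \<Rightarrow> real"
  where "boltzmann_weight v = 1 / (\<Sum>\<tau>\<in>UNIV. exp (v \<tau>))"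

lemma boltzmann_weight_pos: "0 < boltzmann_weight v"
  unfolding boltzmann_weight_def by (intro divide_pos_pos sum_pos) auto

lemma boltzmann_weight_le_1:
  assumes "v \<sigma> = 0"
  shows "boltzmann_weight v \<le> 1"
proof -
  have "exp (v \<sigma>) \<le> (\<Sum>\<tau>\<in>UNIV. exp (v \<tau>))" by (rule member_le_sum) auto
  then show ?thesis using assms unfolding boltzmann_weight_def by simp
qed

lemma boltzmann_weight_le_exp_mult:
  assumes "\<And>\<tau>. \<bar>v \<tau> - v' \<tau>\<bar> \<le> \<delta>"
  shows "boltzmann_weight v \<le> exp \<delta> * boltzmann_weight v'"
proof -
  have "(\<Sum>\<tau>\<in>UNIV. exp (v' \<tau>)) \<le> (\<Sum>\<tau>\<in>UNIV. exp \<delta> * exp (v \<tau>))"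
  proof (rule sum_mono)
    fix \<tau>
    have "v' \<tau> \<le> \<delta> + v \<tau>" using assms[of \<tau>] by linarith
    then show "exp (v' \<tau>) \<le> exp \<delta> * exp (v \<tau>)" by (simp flip: exp_add)
  qed
  also have "\<dots> = exp \<delta> * (\<Sum>\<tau>\<in>UNIV. exp (v \<tau>))" by (simp add: sum_distrib_left)
  finally show ?thesis
    using sum_pos[of UNIV "\<lambda>\<tau>. exp (v \<tau>)"] sum_pos[of UNIV "\<lambda>\<tau>. exp (v' \<tau>)"]
    unfolding boltzmann_weight_def by (simp add: field_simps)
qed

lemma boltzmann_weight_dist:
  assumes "v \<sigma> = 0" "v' \<sigma> = 0" "\<And>\<tau>. \<bar>v \<tau> - v' \<tau>\<bar> \<le> \<delta>"
  shows "\<bar>boltzmann_weight v - boltzmann_weight v'\<bar> \<le> exp \<delta> - 1"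
proof -
  have "\<delta> \<ge> 0" using assms(3)[of \<sigma>] assms(1,2) by simp
  then have e: "exp \<delta> - 1 \<ge> 0" by simp
  have "boltzmann_weight u - boltzmann_weight u' \<le> exp \<delta> - 1"
    if "u' \<sigma> = 0" "\<And>\<tau>. \<bar>u \<tau> - u' \<tau>\<bar> \<le> \<delta>" for u u'
  proof -
    have "boltzmann_weight u \<le> exp \<delta> * boltzmann_weight u'"
      using that(2) by (rule boltzmann_weight_le_exp_mult)
    then have "boltzmann_weight u - boltzmann_weight u' \<le> (exp \<delta> - 1) * boltzmann_weight u'"
      by (simp add: algebra_simps)
    also have "\<dots> \<le> exp \<delta> - 1"
      using e boltzmann_weight_le_1[of u' \<sigma>] that(1) by (simp add: mult_left_le)
    finally show ?thesis .
  qed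
  from this[of v' v] this[of v v'] assms show ?thesis by (fastforce simp: abs_minus_commute)
qed

lemma birkhoff_sum_window:
  assumes "j + int p \<ge> 0"
  shows "birkhoff_sum \<phi> (nat (j + int p + 1)) (window (w(j := \<tau>)) p)
       = (\<Sum>m\<le>nat (j + int p). \<phi> (past_window (\<lambda>t. w (t + j)) m \<tau>))"
proof -
  define n where "n = nat (j + int p)"
  have n: "int n = j + int p" "nat (j + int p + 1) = Suc n" using assms by (auto simp: n_def)
  have shift: "(shiftp ^^ (n - k)) (window (w(j := \<tau>)) p) = past_window (\<lambda>t. w (t + j)) k \<tau>"
    if "k \<le> n" for k
  proof
    fix t
    have idx: "int (t + (n - k)) - int p = int t - int k + j" using that n by simp
    show "(shiftp ^^ (n - k)) (window (w(j := \<tau>)) p) t = past_window (\<lambda>t. w (t + j)) k \<tau> t"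
      unfolding shiftp_pow window_def past_window_def idx by auto
  qed
  have "birkhoff_sum \<phi> (Suc n) (window (w(j := \<tau>)) p)
      = (\<Sum>k<Suc n. \<phi> ((shiftp ^^ (Suc n - Suc k)) (window (w(j := \<tau>)) p)))"
    unfolding birkhoff_sum_def by (rule sum.nat_diff_reindex[symmetric])
  also have "\<dots> = (\<Sum>k\<le>n. \<phi> (past_window (\<lambda>t. w (t + j)) k \<tau>))"
    unfolding lessThan_Suc_atMost by (intro sum.cong) (simp_all add: shift)
  finally show ?thesis using n by (simp add: n_def)
qed

lemma gamma_approx_eq_boltzmann_weight:
  assumes "j + int p \<ge> 0"
  shows "gamma_approx \<phi> j \<sigma> p w = boltzmann_weight (relative_energy \<phi> \<sigma> (nat (j + int p)) (\<lambda>t. w (t + j)))"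
proof -
  define S where "S \<tau> = birkhoff_sum \<phi> (nat (j + int p + 1)) (window (w(j := \<tau>)) p)" for \<tau>
  have "relative_energy \<phi> \<sigma> (nat (j + int p)) (\<lambda>t. w (t + j)) \<tau> = S \<tau> - S \<sigma>" for \<tau>
    unfolding S_def birkhoff_sum_window[OF assms] relative_energy_def by (simp add: sum_subtractf)
  moreover have "exp (S \<sigma>) / (\<Sum>\<tau>\<in>UNIV. exp (S \<tau>)) = 1 / (\<Sum>\<tau>\<in>UNIV. exp (S \<tau> - S \<sigma>))"
    by (simp add: exp_diff flip: sum_divide_distrib)
  ultimately show ?thesis unfolding gamma_approx_def boltzmann_weight_def S_def by simp
qed

definition limit_relative_energy :: "((nat \<Rightarrow> 'e) \<Rightarrow> real) \<Rightarrow> 'e \<Rightarrow> (int \<Rightarrow> 'e) \<Rightarrow> 'e \<Rightarrow> real"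
  where "limit_relative_energy \<phi> \<sigma> x \<tau> = lim (\<lambda>n. relative_energy \<phi> \<sigma> n x \<tau>)"

lemma limit_relative_energy_self [simp]: "limit_relative_energy \<phi> \<sigma> x \<sigma> = 0"
  by (simp add: limit_relative_energy_def limI)

lemma uniform_limit_relative_energy:
  assumes "extensible \<phi>"
  shows "uniform_limit UNIV (\<lambda>n x. relative_energy \<phi> \<sigma> n x \<tau>) (\<lambda>x. limit_relative_energy \<phi> \<sigma> x \<tau>)
      sequentially"
proof -
  obtain l where l: "uniform_limit UNIV (\<lambda>n x. relative_energy \<phi> \<sigma> n x \<tau>) l sequentially"
    using assms unfolding extensible_def uniformly_convergent_on_def relative_energy_def by blast
  moreover have "l = (\<lambda>x. limit_relative_energy \<phi> \<sigma> x \<tau>)"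
  proof
    fix x
    show "l x = limit_relative_energy \<phi> \<sigma> x \<tau>"
      unfolding limit_relative_energy_def using limI[OF tendsto_uniform_limitI[OF l, of x]] by simp
  qed
  ultimately show ?thesis by simp
qed

text \<open>Since \<open>boltzmann_weight\<close> is Lipschitz for the sup-distance of the energies, the uniform
  convergence of the relative energies carries over to the approximants.\<close>

lemma uniform_limit_gamma_approx_boltzmann_weight:
  assumes "extensible \<phi>"
  shows "uniform_limit UNIV (gamma_approx \<phi> j \<sigma>)
      (\<lambda>w. boltzmann_weight (limit_relative_energy \<phi> \<sigma> (\<lambda>t. w (t + j)))) sequentially"
proof (rule uniform_limitI)
  fix \<epsilon> :: real assume "\<epsilon> > 0"
  define \<delta> where "\<delta> = ln (1 + \<epsilon> / 2)"
  have \<delta>: "\<delta> > 0" "exp \<delta> - 1 < \<epsilon>" using \<open>\<epsilon> > 0\<close> by (simp_all add: \<delta>_def)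
  have "\<forall>\<^sub>F n in sequentially. \<forall>\<tau>. \<forall>x\<in>UNIV.
      dist (relative_energy \<phi> \<sigma> n x \<tau>) (limit_relative_energy \<phi> \<sigma> x \<tau>) < \<delta>"
    by (intro eventually_all_finite uniform_limitD[OF uniform_limit_relative_energy[OF assms] \<delta>(1)])
  then obtain N where N: "\<And>n \<tau> x. n \<ge> N \<Longrightarrow>
      \<bar>relative_energy \<phi> \<sigma> n x \<tau> - limit_relative_energy \<phi> \<sigma> x \<tau>\<bar> < \<delta>"
    unfolding eventually_sequentially dist_real_def by blast
  show "\<forall>\<^sub>F p in sequentially. \<forall>w\<in>UNIV. dist (gamma_approx \<phi> j \<sigma> p w)
      (boltzmann_weight (limit_relative_energy \<phi> \<sigma> (\<lambda>t. w (t + j)))) < \<epsilon>"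
  proof (rule eventually_sequentiallyI[of "N + nat (- j)"], intro ballI)
    fix p w assume "N + nat (- j) \<le> p"
    then have p: "j + int p \<ge> 0" "nat (j + int p) \<ge> N" by auto
    have "\<bar>gamma_approx \<phi> j \<sigma> p w - boltzmann_weight (limit_relative_energy \<phi> \<sigma> (\<lambda>t. w (t + j)))\<bar>
        \<le> exp \<delta> - 1"
      unfolding gamma_approx_eq_boltzmann_weight[OF p(1)]
      by (rule boltzmann_weight_dist[where \<sigma> = \<sigma>]) (use N[OF p(2)] in \<open>auto intro: less_imp_le\<close>)
    then show "dist (gamma_approx \<phi> j \<sigma> p w)
        (boltzmann_weight (limit_relative_energy \<phi> \<sigma> (\<lambda>t. w (t + j)))) < \<epsilon>"
      using \<delta> by (simp add: dist_real_def)
  qed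
qed

lemma gamma_kernel_eq_boltzmann_weight:
  assumes "extensible \<phi>"
  shows "gamma_kernel \<phi> j \<sigma> = (\<lambda>w. boltzmann_weight (limit_relative_energy \<phi> \<sigma> (\<lambda>t. w (t + j))))"
  unfolding gamma_kernel_eq_lim[abs_def]
proof
  fix w
  show "lim (\<lambda>p. gamma_approx \<phi> j \<sigma> p w) = boltzmann_weight (limit_relative_energy \<phi> \<sigma> (\<lambda>t. w (t + j)))"
    by (rule limI, rule tendsto_uniform_limitI[OF uniform_limit_gamma_approx_boltzmann_weight[OF assms]])
      simp
qed

lemma uniform_limit_gamma_approx:
  "extensible \<phi> \<Longrightarrow> uniform_limit UNIV (gamma_approx \<phi> j \<sigma>) (gamma_kernel \<phi> j \<sigma>) sequentially"
  unfolding gamma_kernel_eq_boltzmann_weight by (rule uniform_limit_gamma_approx_boltzmann_weight)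

lemma gamma_kernel_pos: "extensible \<phi> \<Longrightarrow> 0 < gamma_kernel \<phi> j \<sigma> w"
  by (simp add: gamma_kernel_eq_boltzmann_weight boltzmann_weight_pos)

lemma gamma_kernel_le_1: "extensible \<phi> \<Longrightarrow> gamma_kernel \<phi> j \<sigma> w \<le> 1"
  by (simp add: gamma_kernel_eq_boltzmann_weight boltzmann_weight_le_1[where \<sigma> = \<sigma>])

lemma continuous_map_gamma_kernel:
  assumes "continuous_map Xp_top euclideanreal \<phi>" and "extensible \<phi>"
  shows "continuous_map Xz_top euclideanreal (gamma_kernel \<phi> j \<sigma>)"
proof -
  have "continuous_map Xz_top Met_TC.mtopology (gamma_kernel \<phi> j \<sigma>)"
  proof (rule Met_TC.continuous_map_uniform_limit[where F = sequentially])
    show "\<forall>\<^sub>F p in sequentially. continuous_map Xz_top Met_TC.mtopology (gamma_approx \<phi> j \<sigma> p)"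
      using continuous_map_gamma_approx[OF assms(1)] by simp
    fix \<epsilon> :: real assume "\<epsilon> > 0"
    from uniform_limitD[OF uniform_limit_gamma_approx[OF assms(2)] this]
    show "\<forall>\<^sub>F p in sequentially. \<forall>x\<in>topspace Xz_top.
        gamma_kernel \<phi> j \<sigma> x \<in> UNIV \<and> dist (gamma_approx \<phi> j \<sigma> p x) (gamma_kernel \<phi> j \<sigma> x) < \<epsilon>"
      by simp
  qed simp
  then show ?thesis by simp
qed

section \<open>Single-site conditional probabilities of half-line Gibbs measures\<close>

lemma half_line_gibbsD:
  assumes "half_line_gibbs \<phi> \<nu>"
  shows "prob_space \<nu>" and "sets \<nu> = sets Xp"
  using assms unfolding half_line_gibbs_def by auto

lemma prefix_concat_restrict [simp]: "prefix_concat n (restrict x {..<n}) x = x"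
  by (auto simp: prefix_concat_def)

lemma prefix_concat_restrict_prefix: "prefix_concat n (restrict a {..<n}) x = prefix_concat n a x"
  by (auto simp: prefix_concat_def)

lemma prefix_concat_fun_upd:
  "m < n \<Longrightarrow> (prefix_concat n a x)(m := \<tau>) = prefix_concat n (a(m := \<tau>)) x"
  by (auto simp: prefix_concat_def)

lemma continuous_map_prefix_concat: "continuous_map Xp_top Xp_top (prefix_concat n a)"
  unfolding prefix_concat_def by (intro continuous_map_into_Xp) (auto intro: continuous_map_Xp_component)

lemma continuous_map_fun_upd_Xp: "continuous_map Xp_top Xp_top (\<lambda>x. x(m := \<tau>))"
  by (intro continuous_map_into_Xp) (auto intro: continuous_map_Xp_component)

lemma subalgebra_tail_algebra:
  assumes "sets \<nu> = sets (Xp :: (nat \<Rightarrow> 'e) measure)"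
  shows "subalgebra \<nu> (tail_algebra n)"
proof -
  have "sets (tail_algebra n) \<subseteq> sets (Xp :: (nat \<Rightarrow> 'e) measure)"
    unfolding tail_algebra_def
    by (rule sets_image_in_sets) (auto simp: Xp_def intro: measurable_restrict_subset)
  then show ?thesis
    using assms sets_eq_imp_space_eq[OF assms] by (simp add: subalgebra_def tail_algebra_def)
qed

lemma borel_measurable_tail_algebra_prefix_concat:
  assumes F: "F \<in> borel_measurable (Xp :: (nat \<Rightarrow> 'e) measure)"
  shows "(\<lambda>x. F (prefix_concat n a x)) \<in> borel_measurable (tail_algebra n)"
proof -
  let ?glue = "\<lambda>y :: nat \<Rightarrow> 'e. \<lambda>k. if k < n then a k else y k"
  have "?glue \<in> measurable (PiM {n..} (\<lambda>_. count_space UNIV)) Xp"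
  proof (intro measurable_Xp_componentwise)
    fix k
    show "(\<lambda>y. ?glue y k) \<in> PiM {n..} (\<lambda>_. count_space UNIV) \<rightarrow>\<^sub>M count_space UNIV"
      by (cases "k < n") (auto intro!: measurable_component_singleton)
  qed
  moreover have "(\<lambda>x. restrict x {n..}) \<in> measurable (tail_algebra n) (PiM {n..} (\<lambda>_. count_space UNIV))"
    unfolding tail_algebra_def by (rule measurable_vimage_algebra1) (auto simp: space_PiM)
  ultimately have "(\<lambda>x. F (?glue (restrict x {n..}))) \<in> borel_measurable (tail_algebra n)"
    using F by measurable
  moreover have "?glue (restrict x {n..}) = prefix_concat n a x" for x
    by (auto simp: prefix_concat_def)
  ultimately show ?thesis by simp
qed

definition gibbs_block_prob :: "((nat \<Rightarrow> 'e::finite) \<Rightarrow> real) \<Rightarrow> nat \<Rightarrow> (nat \<Rightarrow> 'e) \<Rightarrow> (nat \<Rightarrow> 'e) \<Rightarrow> real"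
  where "gibbs_block_prob \<phi> n a x = exp (birkhoff_sum \<phi> n (prefix_concat n a x)) /
    (\<Sum>a'\<in>PiE {..<n} (\<lambda>_. UNIV). exp (birkhoff_sum \<phi> n (prefix_concat n a' x)))"

lemma gibbs_block_prob_nonneg: "0 \<le> gibbs_block_prob \<phi> n a x"
  unfolding gibbs_block_prob_def by (simp add: sum_nonneg)

lemma gibbs_block_prob_le_1: "gibbs_block_prob \<phi> n a x \<le> 1"
proof -
  have a: "restrict a {..<n} \<in> PiE {..<n} (\<lambda>_. UNIV)" by (simp only: restrict_PiE_iff) simp
  show ?thesis
    unfolding gibbs_block_prob_def prefix_concat_restrict_prefix[of n a, symmetric]
    by (rule softmax_le_1[OF _ a]) (simp add: finite_PiE)
qed

lemma continuous_map_gibbs_block_prob: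
  assumes "continuous_map Xp_top euclideanreal \<phi>"
  shows "continuous_map Xp_top euclideanreal (gibbs_block_prob \<phi> n a)"
  unfolding gibbs_block_prob_def[abs_def]
  by (intro continuous_map_real_divide continuous_map_sum
      continuous_map_exp_birkhoff_sum[OF assms continuous_map_prefix_concat])
    (simp_all add: finite_PiE sum_nonneg_eq_0_iff PiE_eq_empty_iff)

text \<open>The conditional probability of \<open>x\<^sub>m = \<sigma>\<close> given the other coordinates: the later terms of the
  Birkhoff sum do not see \<open>x\<^sub>m\<close>.\<close>

definition gibbs_site_prob :: "((nat \<Rightarrow> 'e::finite) \<Rightarrow> real) \<Rightarrow> nat \<Rightarrow> 'e \<Rightarrow> (nat \<Rightarrow> 'e) \<Rightarrow> real"
  where "gibbs_site_prob \<phi> m \<sigma> x = exp (birkhoff_sum \<phi> (Suc m) (x(m := \<sigma>))) /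
    (\<Sum>\<tau>\<in>UNIV. exp (birkhoff_sum \<phi> (Suc m) (x(m := \<tau>))))"

lemma gibbs_site_prob_nonneg: "0 \<le> gibbs_site_prob \<phi> m \<sigma> x"
  unfolding gibbs_site_prob_def by (simp add: sum_nonneg)

lemma gibbs_site_prob_le_1: "gibbs_site_prob \<phi> m \<sigma> x \<le> 1"
  unfolding gibbs_site_prob_def by (rule softmax_le_1) simp_all

lemma continuous_map_gibbs_site_prob:
  assumes "continuous_map Xp_top euclideanreal \<phi>"
  shows "continuous_map Xp_top euclideanreal (gibbs_site_prob \<phi> m \<sigma>)"
  unfolding gibbs_site_prob_def[abs_def]
  by (intro continuous_map_real_divide continuous_map_sum
      continuous_map_exp_birkhoff_sum[OF assms continuous_map_fun_upd_Xp])
    (simp_all add: sum_nonneg_eq_0_iff)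

lemma half_line_gibbs_integral_cylinder:
  fixes \<phi> :: "(nat \<Rightarrow> 'e::finite) \<Rightarrow> real"
  assumes hg: "half_line_gibbs \<phi> \<nu>" and "n \<ge> 1" and \<phi>: "continuous_map Xp_top euclideanreal \<phi>"
    and h: "h \<in> borel_measurable (tail_algebra n)" "\<And>x. \<bar>h x\<bar> \<le> B"
  shows "(\<integral>x. h x * indicator {y. \<forall>i<n. y i = a i} x \<partial>\<nu>) = (\<integral>x. h x * gibbs_block_prob \<phi> n a x \<partial>\<nu>)"
proof -
  interpret prob_space \<nu> by (rule half_line_gibbsD(1)[OF hg])
  note sets = half_line_gibbsD(2)[OF hg]
  let ?F = "restr_to_subalg \<nu> (tail_algebra n)"
  let ?C = "{y. \<forall>i<n. y i = a i}"
  have sub: "subalgebra \<nu> (tail_algebra n)" by (rule subalgebra_tail_algebra[OF sets])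
  interpret finite_measure_subalgebra \<nu> ?F
    by unfold_locales (rule subalgebra_restr_to_subalg[OF sub])
  have hF: "h \<in> borel_measurable ?F"
    using h(1) by (simp add: measurable_cong_sets[OF sets_restr_to_subalg[OF sub] refl])
  have hM: "h \<in> borel_measurable \<nu>" by (rule measurable_from_subalg[OF sub h(1)])
  have CM: "indicator ?C \<in> borel_measurable \<nu>"
    by (rule borel_measurable_indicator) (simp only: sets cylinder_in_sets_Xp)
  have ZM: "gibbs_block_prob \<phi> n a \<in> borel_measurable \<nu>"
    unfolding measurable_cong_sets[OF sets refl]
    by (rule borel_measurable_Xp_continuous[OF continuous_map_gibbs_block_prob[OF \<phi>]])
  have "integrable \<nu> (\<lambda>x. h x * indicator ?C x)"
  proof (rule integrable_const_bound[where B = B])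
    have "0 \<le> B" using h(2)[of undefined] by linarith
    then show "AE x in \<nu>. norm (h x * indicator ?C x) \<le> B"
      using h(2) by (intro AE_I2) (simp add: indicator_def)
  qed (intro borel_measurable_times hM CM)
  then have "(\<integral>x. h x * indicator ?C x \<partial>\<nu>) = (\<integral>x. h x * real_cond_exp \<nu> ?F (indicator ?C) x \<partial>\<nu>)"
    by (rule real_cond_exp_intg(2)[OF _ hF CM, symmetric])
  also have "\<dots> = (\<integral>x. h x * gibbs_block_prob \<phi> n a x \<partial>\<nu>)"
  proof (rule integral_cong_AE)
    show "(\<lambda>x. h x * real_cond_exp \<nu> ?F (indicator ?C) x) \<in> borel_measurable \<nu>"
      by (intro borel_measurable_times hM borel_measurable_cond_exp2)
    show "(\<lambda>x. h x * gibbs_block_prob \<phi> n a x) \<in> borel_measurable \<nu>"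
      by (intro borel_measurable_times hM ZM)
    have "\<forall>n\<ge>1. \<forall>a. AE x in \<nu>.
        real_cond_exp \<nu> (restr_to_subalg \<nu> (tail_algebra n)) (indicator {y. \<forall>i<n. y i = a i}) x
        = gibbs_block_prob \<phi> n a x"
      using hg unfolding half_line_gibbs_def gibbs_block_prob_def by (elim conjE)
    then have "AE x in \<nu>. real_cond_exp \<nu> ?F (indicator ?C) x = gibbs_block_prob \<phi> n a x"
      using \<open>n \<ge> 1\<close> by simp
    then show "AE x in \<nu>. h x * real_cond_exp \<nu> ?F (indicator ?C) x = h x * gibbs_block_prob \<phi> n a x"
      by eventually_elim simp
  qed
  finally show ?thesis .
qed

lemma sum_PiE_indicator_cylinder:
  fixes x :: "nat \<Rightarrow> 'e::finite"
  shows "(\<Sum>a\<in>PiE {..<n} (\<lambda>_. UNIV :: 'e::finite set). f a * indicator {y. \<forall>i<n. y i = a i} x)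
    = (f (restrict x {..<n}) :: real)"
proof -
  have "(\<forall>i<n. x i = a i) \<longleftrightarrow> restrict x {..<n} = a" if "a \<in> PiE {..<n} (\<lambda>_. UNIV)" for a
    using that by (auto simp: PiE_iff extensional_def fun_eq_iff)
  then have "(\<Sum>a\<in>PiE {..<n} (\<lambda>_. UNIV :: 'e set). f a * indicator {y. \<forall>i<n. y i = a i} x)
      = (\<Sum>a\<in>PiE {..<n} (\<lambda>_. UNIV). if restrict x {..<n} = a then f a else 0)"
    by (intro sum.cong) (auto simp: indicator_def)
  also have "\<dots> = f (restrict x {..<n})"
    by (subst sum.delta') (auto intro!: finite_PiE)
  finally show ?thesis .
qed

lemma half_line_gibbs_integral_block_expansion:
  fixes \<phi> :: "(nat \<Rightarrow> 'e::finite) \<Rightarrow> real"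
  assumes hg: "half_line_gibbs \<phi> \<nu>" and "n \<ge> 1" and \<phi>: "continuous_map Xp_top euclideanreal \<phi>"
    and F: "F \<in> borel_measurable Xp" "\<And>x. \<bar>F x\<bar> \<le> B"
  shows "(\<integral>x. F x \<partial>\<nu>)
       = (\<integral>x. (\<Sum>a\<in>PiE {..<n} (\<lambda>_. UNIV). F (prefix_concat n a x) * gibbs_block_prob \<phi> n a x) \<partial>\<nu>)"
proof -
  interpret prob_space \<nu> by (rule half_line_gibbsD(1)[OF hg])
  note sets = half_line_gibbsD(2)[OF hg]
  let ?C = "\<lambda>a. {y. \<forall>i<n. y i = a i}"
  have tail: "(\<lambda>x. F (prefix_concat n a x)) \<in> borel_measurable (tail_algebra n)" for a
    by (rule borel_measurable_tail_algebra_prefix_concat[OF F(1)])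
  have FM: "(\<lambda>x. F (prefix_concat n a x)) \<in> borel_measurable \<nu>" for a
    by (rule measurable_from_subalg[OF subalgebra_tail_algebra[OF sets] tail])
  have CM: "indicator (?C a) \<in> borel_measurable \<nu>" for a :: "nat \<Rightarrow> 'e"
    by (rule borel_measurable_indicator) (simp only: sets cylinder_in_sets_Xp)
  have ZM: "gibbs_block_prob \<phi> n a \<in> borel_measurable \<nu>" for a
    unfolding measurable_cong_sets[OF sets refl]
    by (rule borel_measurable_Xp_continuous[OF continuous_map_gibbs_block_prob[OF \<phi>]])
  have "0 \<le> B" using F(2)[of undefined] by linarith
  have int_cylinder: "integrable \<nu> (\<lambda>x. F (prefix_concat n a x) * indicator (?C a) x)" for a
  proof (rule integrable_const_bound[where B = B])
    show "AE x in \<nu>. norm (F (prefix_concat n a x) * indicator (?C a) x) \<le> B"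
      using F(2) \<open>0 \<le> B\<close> by (intro AE_I2) (simp add: indicator_def)
  qed (intro borel_measurable_times FM CM)
  have int_block: "integrable \<nu> (\<lambda>x. F (prefix_concat n a x) * gibbs_block_prob \<phi> n a x)" for a
  proof (rule integrable_const_bound[where B = B])
    have "\<bar>F (prefix_concat n a x) * gibbs_block_prob \<phi> n a x\<bar> \<le> B" for x
      by (rule abs_mult_le_if_le_1[OF F(2) gibbs_block_prob_nonneg gibbs_block_prob_le_1])
    then show "AE x in \<nu>. norm (F (prefix_concat n a x) * gibbs_block_prob \<phi> n a x) \<le> B" by simp
  qed (intro borel_measurable_times FM ZM)
  have "(\<integral>x. F x \<partial>\<nu>)
      = (\<integral>x. (\<Sum>a\<in>PiE {..<n} (\<lambda>_. UNIV). F (prefix_concat n a x) * indicator (?C a) x) \<partial>\<nu>)"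
    by (simp add: sum_PiE_indicator_cylinder)
  also have "\<dots> = (\<Sum>a\<in>PiE {..<n} (\<lambda>_. UNIV). \<integral>x. F (prefix_concat n a x) * indicator (?C a) x \<partial>\<nu>)"
    by (rule Bochner_Integration.integral_sum[OF int_cylinder])
  also have "\<dots> = (\<Sum>a\<in>PiE {..<n} (\<lambda>_. UNIV). \<integral>x. F (prefix_concat n a x) * gibbs_block_prob \<phi> n a x \<partial>\<nu>)"
    by (intro sum.cong refl half_line_gibbs_integral_cylinder[OF hg \<open>n \<ge> 1\<close> \<phi> tail F(2)])
  also have "\<dots> = (\<integral>x. (\<Sum>a\<in>PiE {..<n} (\<lambda>_. UNIV). F (prefix_concat n a x) * gibbs_block_prob \<phi> n a x) \<partial>\<nu>)"
    by (rule Bochner_Integration.integral_sum[OF int_block, symmetric])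
  finally show ?thesis .
qed

lemma sum_PiE_fun_upd_fibres:
  fixes f :: "(nat \<Rightarrow> 'e::finite) \<Rightarrow> real"
  assumes "m < n"
  shows "(\<Sum>a\<in>PiE {..<n} (\<lambda>_. UNIV). f a)
       = (\<Sum>a\<in>PiE {..<n} (\<lambda>_. UNIV). if a m = \<sigma> then (\<Sum>\<tau>\<in>UNIV. f (a(m := \<tau>))) else 0)"
proof -
  let ?P = "PiE {..<n} (\<lambda>_. UNIV :: 'e set)"
  let ?Q = "{a \<in> ?P. a m = \<sigma>}"
  have upd: "a(m := \<tau>) \<in> ?P" if "a \<in> ?P" for a \<tau>
    using PiE_fun_upd[OF _ that, of \<tau> m] assms by (simp add: insert_absorb)
  have "bij_betw (\<lambda>(a, \<tau>). a(m := \<tau>)) (?Q \<times> (UNIV :: 'e set)) ?P"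
  proof (rule bij_betw_byWitness[where f' = "\<lambda>b. (b(m := \<sigma>), b m)"])
    show "\<forall>z\<in>?Q \<times> (UNIV :: 'e set). (\<lambda>b. (b(m := \<sigma>), b m)) ((\<lambda>(a, \<tau>). a(m := \<tau>)) z) = z"
    proof
      fix z assume "z \<in> ?Q \<times> (UNIV :: 'e set)"
      then obtain a \<tau> where "z = (a, \<tau>)" "a m = \<sigma>" by auto
      then show "(\<lambda>b. (b(m := \<sigma>), b m)) ((\<lambda>(a, \<tau>). a(m := \<tau>)) z) = z" by auto
    qed
    show "\<forall>b\<in>?P. (\<lambda>(a, \<tau>). a(m := \<tau>)) (b(m := \<sigma>), b m) = b" by simp
    show "(\<lambda>(a, \<tau>). a(m := \<tau>)) ` (?Q \<times> (UNIV :: 'e set)) \<subseteq> ?P" using upd by auto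
    show "(\<lambda>b. (b(m := \<sigma>), b m)) ` ?P \<subseteq> ?Q \<times> (UNIV :: 'e set)" using upd by auto
  qed
  then have "(\<Sum>a\<in>?P. f a) = (\<Sum>z\<in>?Q \<times> (UNIV :: 'e set). f ((\<lambda>(a, \<tau>). a(m := \<tau>)) z))"
    by (rule sum.reindex_bij_betw[symmetric])
  also have "\<dots> = (\<Sum>a\<in>?Q. \<Sum>\<tau>\<in>UNIV. f (a(m := \<tau>)))"
    by (subst sum.cartesian_product) (simp add: case_prod_beta)
  also have "\<dots> = (\<Sum>a\<in>?P. if a m = \<sigma> then (\<Sum>\<tau>\<in>UNIV. f (a(m := \<tau>))) else 0)"
    by (rule sum.inter_filter) (simp add: finite_PiE)
  finally show ?thesis .
qed

text \<open>On each fibre \<open>{a(m := \<tau>) | \<tau>}\<close> the site probability is the ratio of the block probability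
  at \<open>\<tau> = \<sigma>\<close> to the sum of the block probabilities over the fibre.\<close>

lemma sum_block_prob_site_prob:
  fixes g :: "(nat \<Rightarrow> 'e::finite) \<Rightarrow> real"
  assumes g: "\<And>x \<tau>. g (x(m := \<tau>)) = g x"
  shows "(\<Sum>a\<in>PiE {..<Suc m} (\<lambda>_. UNIV). g (prefix_concat (Suc m) a x)
            * indicator {y. y m = \<sigma>} (prefix_concat (Suc m) a x) * gibbs_block_prob \<phi> (Suc m) a x)
       = (\<Sum>a\<in>PiE {..<Suc m} (\<lambda>_. UNIV).
          g (prefix_concat (Suc m) a x) * gibbs_site_prob \<phi> m \<sigma> (prefix_concat (Suc m) a x)
            * gibbs_block_prob \<phi> (Suc m) a x)"
proof -
  define n where "n = Suc m"
  have m: "m < n" by (simp add: n_def)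
  define E where "E a = exp (birkhoff_sum \<phi> n (prefix_concat n a x))" for a
  define Z where "Z = (\<Sum>a\<in>PiE {..<n} (\<lambda>_. UNIV :: 'e set). E a)"
  have block: "gibbs_block_prob \<phi> n a x = E a / Z" for a
    unfolding gibbs_block_prob_def E_def Z_def ..
  have site: "gibbs_site_prob \<phi> m \<sigma> (prefix_concat n a x) = E (a(m := \<sigma>)) / (\<Sum>\<tau>\<in>UNIV. E (a(m := \<tau>)))"
    for a
    by (simp add: gibbs_site_prob_def E_def prefix_concat_fun_upd[OF m] flip: n_def)
  have g_upd: "g (prefix_concat n (a(m := \<tau>)) x) = g (prefix_concat n a x)" for a \<tau>
    using g[of "prefix_concat n a x" \<tau>] by (simp add: prefix_concat_fun_upd[OF m])
  have fibre: "(\<Sum>\<tau>\<in>UNIV. g (prefix_concat n (a(m := \<tau>)) x)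
        * gibbs_site_prob \<phi> m \<sigma> (prefix_concat n (a(m := \<tau>)) x) * gibbs_block_prob \<phi> n (a(m := \<tau>)) x)
      = g (prefix_concat n a x) * E a / Z" if "a m = \<sigma>" for a
  proof -
    have "0 < (\<Sum>\<tau>\<in>UNIV. E (a(m := \<tau>)))" unfolding E_def by (rule sum_pos) auto
    moreover have "a(m := \<sigma>) = a" using that by auto
    ultimately show ?thesis
      by (simp add: g_upd site block sum_distrib_left[symmetric] sum_divide_distrib[symmetric])
  qed
  have "(\<Sum>a\<in>PiE {..<n} (\<lambda>_. UNIV).
      g (prefix_concat n a x) * gibbs_site_prob \<phi> m \<sigma> (prefix_concat n a x) * gibbs_block_prob \<phi> n a x)
    = (\<Sum>a\<in>PiE {..<n} (\<lambda>_. UNIV). if a m = \<sigma> then g (prefix_concat n a x) * E a / Z else 0)"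
    by (subst sum_PiE_fun_upd_fibres[OF m, where \<sigma> = \<sigma>]) (simp add: fibre cong: if_cong)
  also have "\<dots> = (\<Sum>a\<in>PiE {..<n} (\<lambda>_. UNIV).
      g (prefix_concat n a x) * indicator {y. y m = \<sigma>} (prefix_concat n a x) * gibbs_block_prob \<phi> n a x)"
    using m by (intro sum.cong refl) (simp add: block indicator_def prefix_concat_def)
  finally show ?thesis by (simp add: n_def)
qed

lemma half_line_gibbs_site_integral:
  fixes g :: "(nat \<Rightarrow> 'e::finite) \<Rightarrow> real"
  assumes hg: "half_line_gibbs \<phi> \<nu>" and \<phi>: "continuous_map Xp_top euclideanreal \<phi>"
    and g: "g \<in> borel_measurable Xp" "\<And>x. \<bar>g x\<bar> \<le> B" "\<And>x \<tau>. g (x(m := \<tau>)) = g x"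
  shows "(\<integral>x. g x * indicator {x. x m = \<sigma>} x \<partial>\<nu>) = (\<integral>x. g x * gibbs_site_prob \<phi> m \<sigma> x \<partial>\<nu>)"
proof -
  have site_M: "(\<lambda>x. g x * indicator {x. x m = \<sigma>} x) \<in> borel_measurable Xp"
    using g(1) measurable_Xp_component by measurable
  have site_bound: "\<bar>g x * indicator {x. x m = \<sigma>} x\<bar> \<le> B" for x
    by (rule abs_mult_le_if_le_1[OF g(2)]) simp_all
  have "(\<integral>x. g x * indicator {x. x m = \<sigma>} x \<partial>\<nu>)
      = (\<integral>x. (\<Sum>a\<in>PiE {..<Suc m} (\<lambda>_. UNIV). g (prefix_concat (Suc m) a x)
          * indicator {y. y m = \<sigma>} (prefix_concat (Suc m) a x) * gibbs_block_prob \<phi> (Suc m) a x) \<partial>\<nu>)"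
    by (rule half_line_gibbs_integral_block_expansion[OF hg _ \<phi> site_M site_bound]) simp
  also have "\<dots> = (\<integral>x. (\<Sum>a\<in>PiE {..<Suc m} (\<lambda>_. UNIV). g (prefix_concat (Suc m) a x)
      * gibbs_site_prob \<phi> m \<sigma> (prefix_concat (Suc m) a x) * gibbs_block_prob \<phi> (Suc m) a x) \<partial>\<nu>)"
    by (simp only: sum_block_prob_site_prob[OF g(3)])
  also have "\<dots> = (\<integral>x. g x * gibbs_site_prob \<phi> m \<sigma> x \<partial>\<nu>)"
  proof (rule half_line_gibbs_integral_block_expansion[OF hg _ \<phi>, symmetric])
    show "(\<lambda>x. g x * gibbs_site_prob \<phi> m \<sigma> x) \<in> borel_measurable Xp"
      using g(1) borel_measurable_Xp_continuous[OF continuous_map_gibbs_site_prob[OF \<phi>]]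
      by (rule borel_measurable_times)
    show "\<bar>g x * gibbs_site_prob \<phi> m \<sigma> x\<bar> \<le> B" for x
      by (rule abs_mult_le_if_le_1[OF g(2) gibbs_site_prob_nonneg gibbs_site_prob_le_1])
  qed simp
  finally show ?thesis .
qed

section \<open>The shifted product measures\<close>

lemma sets_rho: "sets (rho :: (nat \<Rightarrow> 'e::finite) measure) = sets Xp"
  unfolding rho_def Xp_def by (rule sets_PiM_cong) (auto simp: sets_uniform_count_measure)

lemma prob_space_rho: "prob_space (rho :: (nat \<Rightarrow> 'e::finite) measure)"
  unfolding rho_def by (rule prob_space_PiM) (rule prob_space_uniform_count_measure, auto)

lemma measurable_glue:
  assumes "sets \<nu> = sets (Xp :: (nat \<Rightarrow> 'e::finite) measure)"
  shows "glue \<in> measurable (rho \<Otimes>\<^sub>M \<nu>) Xz"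
proof (rule measurable_Xz_componentwise)
  have r: "(\<lambda>x. x k) \<in> measurable rho (count_space UNIV)"
    and n: "(\<lambda>x. x k) \<in> measurable \<nu> (count_space UNIV)" for k
    unfolding measurable_cong_sets[OF sets_rho refl] measurable_cong_sets[OF assms refl]
    by (rule measurable_Xp_component)+
  have "(\<lambda>z. fst z k) \<in> measurable (rho \<Otimes>\<^sub>M \<nu>) (count_space UNIV)"
    and "(\<lambda>z. snd z k) \<in> measurable (rho \<Otimes>\<^sub>M \<nu>) (count_space UNIV)" for k
    by (rule measurable_fst''[OF r], rule measurable_snd''[OF n])
  then show "(\<lambda>z. glue z t) \<in> measurable (rho \<Otimes>\<^sub>M \<nu>) (count_space UNIV)" for t
    by (cases "t < 0") (simp_all add: glue_def case_prod_beta)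
qed

lemma prob_space_mu0:
  assumes "prob_space \<nu>" "sets \<nu> = sets (Xp :: (nat \<Rightarrow> 'e::finite) measure)"
  shows "prob_space (mu0 \<nu>)"
proof -
  interpret prob_space "rho \<Otimes>\<^sub>M \<nu>" by (rule prob_space_pair[OF prob_space_rho assms(1)])
  show ?thesis unfolding mu0_def by (rule prob_space_distr[OF measurable_glue[OF assms(2)]])
qed

lemma sets_mu0 [simp]: "sets (mu0 \<nu>) = sets Xz"
  by (simp add: mu0_def)

lemma prob_space_distr_shiftz_pow:
  assumes "prob_space \<mu>" "sets \<mu> = sets (Xz :: (int \<Rightarrow> 'e) measure)"
  shows "prob_space (distr \<mu> Xz (shiftz ^^ i))"
proof -
  interpret prob_space \<mu> by (rule assms(1))
  show ?thesis
    by (rule prob_space_distr)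
      (simp add: measurable_cong_sets[OF assms(2) refl] measurable_shiftz_pow)
qed

text \<open>\<open>x\<close> placed with its coordinate \<open>0\<close> at site \<open>-i\<close>; the sites left of \<open>-i\<close> carry the junk
  value \<open>x 0\<close>.\<close>

definition embed_at :: "nat \<Rightarrow> (nat \<Rightarrow> 'e) \<Rightarrow> int \<Rightarrow> 'e"
  where "embed_at i x = (\<lambda>t. x (nat (t + int i)))"

lemma measurable_embed_at: "embed_at i \<in> measurable Xp Xz"
  unfolding embed_at_def by (intro measurable_Xz_componentwise measurable_Xp_component)

lemma integral_distr_shiftz_pow_mu0:
  fixes h :: "(int \<Rightarrow> 'e::finite) \<Rightarrow> real"
  assumes \<nu>: "prob_space \<nu>" "sets \<nu> = sets (Xp :: (nat \<Rightarrow> 'e) measure)"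
    and h: "h \<in> borel_measurable Xz"
    and h_local: "\<And>w w'. (\<And>t. t \<ge> - int i \<Longrightarrow> w t = w' t) \<Longrightarrow> h w = h w'"
  shows "(\<integral>w. h w \<partial>distr (mu0 \<nu>) Xz (shiftz ^^ i)) = (\<integral>x. h (embed_at i x) \<partial>\<nu>)"
proof -
  interpret \<nu>: prob_space \<nu> by (rule \<nu>(1))
  have shift: "(shiftz ^^ i) \<in> measurable (mu0 \<nu>) Xz"
    by (simp add: measurable_cong_sets[OF sets_mu0 refl] measurable_shiftz_pow)
  have hS: "(\<lambda>w. h ((shiftz ^^ i) w)) \<in> borel_measurable Xz"
    using measurable_comp[OF measurable_shiftz_pow h] by (simp add: o_def)
  have h_embed: "(\<lambda>x. h (embed_at i x)) \<in> borel_measurable \<nu>"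
    using measurable_comp[OF measurable_embed_at h] by (simp add: o_def measurable_cong_sets[OF \<nu>(2) refl])
  have "(\<integral>w. h w \<partial>distr (mu0 \<nu>) Xz (shiftz ^^ i)) = (\<integral>w. h ((shiftz ^^ i) w) \<partial>mu0 \<nu>)"
    by (rule integral_distr[OF shift h])
  also have "\<dots> = (\<integral>z. h ((shiftz ^^ i) (glue z)) \<partial>(rho \<Otimes>\<^sub>M \<nu>))"
    unfolding mu0_def by (rule integral_distr[OF measurable_glue[OF \<nu>(2)] hS])
  also have "\<dots> = (\<integral>z. h (embed_at i (snd z)) \<partial>((rho :: (nat \<Rightarrow> 'e) measure) \<Otimes>\<^sub>M \<nu>))"
  proof (intro Bochner_Integration.integral_cong refl)
    fix z
    show "h ((shiftz ^^ i) (glue z)) = h (embed_at i (snd z))"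
      by (rule h_local) (simp add: shiftz_pow glue_def embed_at_def case_prod_beta)
  qed
  also have "\<dots> = (\<integral>x. h (embed_at i x) \<partial>distr ((rho :: (nat \<Rightarrow> 'e) measure) \<Otimes>\<^sub>M \<nu>) \<nu> snd)"
    by (rule integral_distr[symmetric]) (simp_all add: h_embed)
  also have "\<dots> = (\<integral>x. h (embed_at i x) \<partial>\<nu>)"
    by (simp add: \<nu>.distr_pair_snd[OF prob_space_rho])
  finally show ?thesis .
qed

lemma embed_at_fun_upd_other:
  assumes "t \<noteq> j" "j + int i \<ge> 0" "t + int i \<ge> 0"
  shows "embed_at i (x(nat (j + int i) := \<tau>)) t = embed_at i x t"
  using assms by (simp add: embed_at_def eq_nat_nat_iff)

lemma gamma_approx_cong:
  assumes "\<And>t. t \<ge> - int p \<Longrightarrow> w t = w' t"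
  shows "gamma_approx \<phi> j \<sigma> p w = gamma_approx \<phi> j \<sigma> p w'"
proof -
  have "window (w(j := \<tau>)) p = window (w'(j := \<tau>)) p" for \<tau>
    using assms by (auto simp: window_def)
  then show ?thesis by (simp add: gamma_approx_def)
qed

lemma gamma_approx_embed_at:
  assumes "j + int i \<ge> 0"
  shows "gamma_approx \<phi> j \<sigma> i (embed_at i x) = gibbs_site_prob \<phi> (nat (j + int i)) \<sigma> x"
proof -
  have m: "int (nat (j + int i)) = j + int i" using assms by simp
  have "window ((embed_at i x)(j := \<tau>)) i = x(nat (j + int i) := \<tau>)" for \<tau>
  proof
    fix k
    show "window ((embed_at i x)(j := \<tau>)) i k = (x(nat (j + int i) := \<tau>)) k"
      using m by (auto simp: window_def embed_at_def)
  qed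
  moreover have "nat (j + int i + 1) = Suc (nat (j + int i))" using assms by simp
  ultimately show ?thesis by (simp add: gamma_approx_def gibbs_site_prob_def)
qed

text \<open>To the right of \<open>-i\<close>, \<^const>\<open>gamma_approx\<close> is the half-line site probability of \<open>\<nu>\<close>
  (\<open>gamma_approx_embed_at\<close>), so the half-line Gibbs property gives an exact identity.\<close>

lemma integral_distr_shiftz_pow_mu0_site:
  fixes \<phi> :: "(nat \<Rightarrow> 'e::finite) \<Rightarrow> real"
  assumes hg: "half_line_gibbs \<phi> \<nu>" and \<phi>: "continuous_map Xp_top euclideanreal \<phi>"
    and J: "finite J" "j \<notin> J"
    and i: "j + int i \<ge> 0" "\<And>t. t \<in> J \<Longrightarrow> t + int i \<ge> 0"
  shows "(\<integral>w. indicator {x. \<forall>t\<in>J. x t \<in> V t} w * indicator {w. w j = \<sigma>} w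
            \<partial>distr (mu0 \<nu>) Xz (shiftz ^^ i))
       = (\<integral>w. indicator {x. \<forall>t\<in>J. x t \<in> V t} w * gamma_approx \<phi> j \<sigma> i w
            \<partial>distr (mu0 \<nu>) Xz (shiftz ^^ i))"
proof -
  note \<nu> = half_line_gibbsD[OF hg]
  let ?A = "{x. \<forall>t\<in>J. x t \<in> V t}"
  define m where "m = nat (j + int i)"
  have AM: "indicator ?A \<in> borel_measurable Xz"
    using cylinder_in_sets_Xz[OF J(1)] by (rule borel_measurable_indicator)
  have A_local: "indicator ?A w = (indicator ?A w' :: real)"
    if eq: "\<And>t. t \<ge> - int i \<Longrightarrow> w t = w' t" for w w'
  proof -
    have "w t = w' t" if "t \<in> J" for t using eq i(2)[OF that] by simp
    then show ?thesis by (auto simp: indicator_def)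
  qed
  define g where "g x = (indicator ?A (embed_at i x) :: real)" for x
  have "g \<in> borel_measurable Xp"
    unfolding g_def using measurable_comp[OF measurable_embed_at AM] by (simp add: o_def)
  moreover have "\<bar>g x\<bar> \<le> 1" for x by (simp add: g_def indicator_def)
  moreover have "g (x(m := \<tau>)) = g x" for x \<tau>
  proof -
    have "embed_at i (x(m := \<tau>)) t = embed_at i x t" if "t \<in> J" for t
      using that J(2) by (auto simp: m_def intro!: embed_at_fun_upd_other i)
    then show ?thesis by (auto simp: g_def indicator_def)
  qed
  ultimately have site: "(\<integral>x. g x * indicator {x. x m = \<sigma>} x \<partial>\<nu>) = (\<integral>x. g x * gibbs_site_prob \<phi> m \<sigma> x \<partial>\<nu>)"
    by (rule half_line_gibbs_site_integral[OF hg \<phi>])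
  have "(\<integral>w. indicator ?A w * indicator {w. w j = \<sigma>} w \<partial>distr (mu0 \<nu>) Xz (shiftz ^^ i))
      = (\<integral>x. g x * indicator {x. x m = \<sigma>} x \<partial>\<nu>)"
  proof (subst integral_distr_shiftz_pow_mu0[OF \<nu>])
    show "(\<lambda>w. indicator ?A w * indicator {w. w j = \<sigma>} w :: real) \<in> borel_measurable Xz"
      using AM borel_measurable_indicator[OF site_in_sets_Xz] by (rule borel_measurable_times)
    show "indicator ?A w * indicator {w. w j = \<sigma>} w = (indicator ?A w' * indicator {w. w j = \<sigma>} w' :: real)"
      if "\<And>t. t \<ge> - int i \<Longrightarrow> w t = w' t" for w w'
      using A_local[OF that] that[of j] i(1) by (simp add: indicator_def)
  qed (use i(1) in \<open>simp add: g_def m_def embed_at_def indicator_def\<close>)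
  also have "\<dots> = (\<integral>x. g x * gibbs_site_prob \<phi> m \<sigma> x \<partial>\<nu>)" by (rule site)
  also have "\<dots> = (\<integral>w. indicator ?A w * gamma_approx \<phi> j \<sigma> i w \<partial>distr (mu0 \<nu>) Xz (shiftz ^^ i))"
  proof (subst integral_distr_shiftz_pow_mu0[OF \<nu>])
    show "(\<lambda>w. indicator ?A w * gamma_approx \<phi> j \<sigma> i w :: real) \<in> borel_measurable Xz"
      using AM borel_measurable_Xz_continuous[OF continuous_map_gamma_approx[OF \<phi>]]
      by (rule borel_measurable_times)
    show "indicator ?A w * gamma_approx \<phi> j \<sigma> i w = indicator ?A w' * gamma_approx \<phi> j \<sigma> i w'"
      if "\<And>t. t \<ge> - int i \<Longrightarrow> w t = w' t" for w w'
      using A_local[OF that] gamma_approx_cong[OF that] by simp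
  qed (simp add: g_def m_def gamma_approx_embed_at[OF i(1)])
  finally show ?thesis .
qed

section \<open>Weak-* limit points of the Cesaro averages\<close>

lemma weak_star_limit_point_avgD:
  assumes "weak_star_limit_point_avg \<mu> \<mu>\<^sub>0"
  shows "prob_space \<mu>" and "sets \<mu> = sets Xz"
  using assms unfolding weak_star_limit_point_avg_def by auto

lemma weak_star_limit_point_avg_integral_eq:
  assumes "weak_star_limit_point_avg \<mu> \<mu>\<^sub>0"
    and f: "continuous_map Xz_top euclideanreal f" and g: "continuous_map Xz_top euclideanreal g"
    and fg: "(\<lambda>n. (1 / real n) * (\<Sum>i<n. integral\<^sup>L (distr \<mu>\<^sub>0 Xz (shiftz ^^ i)) f
              - integral\<^sup>L (distr \<mu>\<^sub>0 Xz (shiftz ^^ i)) g)) \<longlonglongrightarrow> 0"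
  shows "integral\<^sup>L \<mu> f = integral\<^sup>L \<mu> g"
proof -
  let ?avg = "\<lambda>h k. (1 / real k) * (\<Sum>i<k. integral\<^sup>L (distr \<mu>\<^sub>0 Xz (shiftz ^^ i)) h)"
  obtain r where r: "strict_mono r"
    and lim: "\<And>h. continuous_map Xz_top euclideanreal h \<Longrightarrow> (\<lambda>k. ?avg h (r k)) \<longlonglongrightarrow> integral\<^sup>L \<mu> h"
    using assms(1) unfolding weak_star_limit_point_avg_def by blast
  have "(\<lambda>k. ?avg f (r k) - ?avg g (r k)) \<longlonglongrightarrow> integral\<^sup>L \<mu> f - integral\<^sup>L \<mu> g"
    by (intro tendsto_diff lim f g)
  moreover have "(\<lambda>k. ?avg f (r k) - ?avg g (r k)) \<longlonglongrightarrow> 0"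
    using LIMSEQ_subseq_LIMSEQ[OF fg r] by (simp add: o_def sum_subtractf right_diff_distrib)
  ultimately show ?thesis using LIMSEQ_unique by fastforce
qed

text \<open>The shift turns the sum of the first \<open>n\<close> integrals into a telescoping difference of two
  bounded terms.\<close>

lemma weak_star_limit_point_avg_integral_shiftz:
  fixes f :: "(int \<Rightarrow> 'e::finite) \<Rightarrow> real"
  assumes "weak_star_limit_point_avg \<mu> \<mu>\<^sub>0" and \<mu>\<^sub>0: "prob_space \<mu>\<^sub>0" "sets \<mu>\<^sub>0 = sets Xz"
    and f: "continuous_map Xz_top euclideanreal f" and bound: "\<And>w. \<bar>f w\<bar> \<le> B"
  shows "(\<integral>w. f (shiftz w) \<partial>\<mu>) = (\<integral>w. f w \<partial>\<mu>)"
proof (rule weak_star_limit_point_avg_integral_eq[OF assms(1)])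
  show fS: "continuous_map Xz_top euclideanreal (\<lambda>w. f (shiftz w))"
    using continuous_map_compose[OF continuous_map_shiftz f] by (simp add: o_def)
  have fM: "f \<in> borel_measurable Xz" by (rule borel_measurable_Xz_continuous[OF f])
  have shift: "(shiftz ^^ i) \<in> measurable \<mu>\<^sub>0 Xz" for i
    by (simp add: measurable_cong_sets[OF \<mu>\<^sub>0(2) refl] measurable_shiftz_pow)
  define a where "a i = integral\<^sup>L (distr \<mu>\<^sub>0 Xz (shiftz ^^ i)) f" for i
  have step: "integral\<^sup>L (distr \<mu>\<^sub>0 Xz (shiftz ^^ i)) (\<lambda>w. f (shiftz w)) = a (Suc i)" for i
  proof -
    have "integral\<^sup>L (distr \<mu>\<^sub>0 Xz (shiftz ^^ i)) (\<lambda>w. f (shiftz w)) = (\<integral>w. f (shiftz ((shiftz ^^ i) w)) \<partial>\<mu>\<^sub>0)"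
      using measurable_comp[OF measurable_shiftz fM] by (intro integral_distr[OF shift]) (simp add: o_def)
    also have "\<dots> = a (Suc i)"
      unfolding a_def by (subst integral_distr[OF shift fM]) simp
    finally show ?thesis .
  qed
  have a_bound: "\<bar>a i\<bar> \<le> B" for i
  proof -
    interpret prob_space "distr \<mu>\<^sub>0 Xz (shiftz ^^ i)" by (rule prob_space_distr_shiftz_pow[OF \<mu>\<^sub>0])
    have "\<bar>a i\<bar> \<le> (\<integral>w. \<bar>f w\<bar> \<partial>distr \<mu>\<^sub>0 Xz (shiftz ^^ i))" unfolding a_def by (rule integral_abs_bound)
    also have "\<dots> \<le> B"
      using fM bound by (intro integral_le_const integrable_const_bound[where B = B] AE_I2) auto
    finally show ?thesis .
  qed
  have "(\<lambda>n. (1 / real n) * (a n - a 0)) \<longlonglongrightarrow> 0"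
  proof (rule Lim_null_comparison)
    have "\<bar>a n - a 0\<bar> \<le> 2 * B" for n using a_bound[of n] a_bound[of 0] by linarith
    then show "\<forall>\<^sub>F n in sequentially. norm ((1 / real n) * (a n - a 0)) \<le> 2 * B * (1 / real n)"
      by (intro always_eventually allI) (simp add: abs_mult divide_right_mono)
    show "(\<lambda>n. 2 * B * (1 / real n)) \<longlonglongrightarrow> 0"
      using tendsto_mult[OF tendsto_const lim_1_over_n, of "2 * B"] by simp
  qed
  then show "(\<lambda>n. (1 / real n) * (\<Sum>i<n. integral\<^sup>L (distr \<mu>\<^sub>0 Xz (shiftz ^^ i)) (\<lambda>w. f (shiftz w))
      - integral\<^sup>L (distr \<mu>\<^sub>0 Xz (shiftz ^^ i)) f)) \<longlonglongrightarrow> 0"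
    by (simp only: step a_def[symmetric] sum_lessThan_telescope)
qed (rule f)

lemma translation_invariant_weak_star_limit_point_avg:
  assumes "weak_star_limit_point_avg \<mu> \<mu>\<^sub>0" and \<mu>\<^sub>0: "prob_space \<mu>\<^sub>0" "sets \<mu>\<^sub>0 = sets Xz"
  shows "translation_invariant (\<mu> :: (int \<Rightarrow> 'e::finite) measure)"
proof -
  interpret prob_space \<mu> by (rule weak_star_limit_point_avgD(1)[OF assms(1)])
  note sets = weak_star_limit_point_avgD(2)[OF assms(1)]
  have S: "shiftz \<in> measurable \<mu> Xz" by (simp add: measurable_cong_sets[OF sets refl] measurable_shiftz)
  interpret S: prob_space "distr \<mu> Xz shiftz" by (rule prob_space_distr[OF S])
  let ?E = "prod_algebra (UNIV :: int set) (\<lambda>_. count_space (UNIV :: 'e set))"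
  have "distr \<mu> Xz shiftz = \<mu>"
  proof (rule measure_eqI_generator_eq[where E = ?E and \<Omega> = UNIV and A = "\<lambda>_. UNIV"])
    fix X assume "X \<in> ?E"
    from prod_algebraE[OF this] obtain J E
      where "finite J" and "X = prod_emb UNIV (\<lambda>_. count_space (UNIV :: 'e set)) J (PiE J E)"
      by metis
    then have X: "X = {x. \<forall>t\<in>J. x t \<in> E t}" by (simp add: prod_emb_PiE_count_space)
    have XM: "X \<in> sets Xz" unfolding X by (rule cylinder_in_sets_Xz[OF \<open>finite J\<close>])
    have "(\<integral>w. indicator X (shiftz w) \<partial>\<mu>) = (\<integral>w. indicator X w \<partial>\<mu> :: real)"
      using continuous_map_indicator_cylinder_Xz[OF \<open>finite J\<close>, of E]
      by (intro weak_star_limit_point_avg_integral_shiftz[OF assms, where B = 1]) (simp_all add: X)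
    then have "measure (distr \<mu> Xz shiftz) X = measure \<mu> X"
      using XM sets sets_eq_imp_space_eq[OF sets] by (simp add: integral_distr[OF S, symmetric])
    then show "emeasure (distr \<mu> Xz shiftz) X = emeasure \<mu> X"
      by (simp add: S.emeasure_eq_measure emeasure_eq_measure)
  qed (use sets sets_Xz_eq_sigma_prod_algebra UNIV_in_prod_algebra Int_stable_prod_algebra in
        \<open>auto simp: S.emeasure_eq_measure\<close>)
  then show ?thesis unfolding translation_invariant_def .
qed

section \<open>The DLR equations for the limit\<close>

lemma shifted_mu0_site_minus_gamma_kernel_tendsto_0:
  fixes \<phi> :: "(nat \<Rightarrow> 'e::finite) \<Rightarrow> real"
  assumes hg: "half_line_gibbs \<phi> \<nu>" and \<phi>: "continuous_map Xp_top euclideanreal \<phi>"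
    and ext: "extensible \<phi>" and J: "finite J" "j \<notin> J"
  shows "(\<lambda>i. (\<integral>w. indicator {x. \<forall>t\<in>J. x t \<in> V t} w * indicator {w. w j = \<sigma>} w
              \<partial>distr (mu0 \<nu>) Xz (shiftz ^^ i))
          - (\<integral>w. indicator {x. \<forall>t\<in>J. x t \<in> V t} w * gamma_kernel \<phi> j \<sigma> w
              \<partial>distr (mu0 \<nu>) Xz (shiftz ^^ i))) \<longlonglongrightarrow> 0"
proof (rule LIMSEQ_I)
  fix e :: real assume "e > 0"
  let ?A = "{x. \<forall>t\<in>J. x t \<in> V t}"
  let ?\<mu> = "\<lambda>i. distr (mu0 \<nu>) Xz (shiftz ^^ i)"
  note \<nu> = half_line_gibbsD[OF hg]
  have "\<forall>\<^sub>F i in sequentially. \<forall>t\<in>insert j J. t + int i \<ge> 0"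
  proof (rule eventually_ball_finite, use J(1) in simp, rule ballI)
    fix t show "\<forall>\<^sub>F i in sequentially. t + int i \<ge> 0"
      by (rule eventually_sequentiallyI[of "nat (- t)"]) auto
  qed
  moreover have "\<forall>\<^sub>F i in sequentially. \<forall>w. \<bar>gamma_approx \<phi> j \<sigma> i w - gamma_kernel \<phi> j \<sigma> w\<bar> < e / 2"
    using uniform_limitD[OF uniform_limit_gamma_approx[OF ext], of "e / 2"] \<open>e > 0\<close>
    by (simp add: dist_real_def)
  ultimately show "\<exists>N. \<forall>i\<ge>N. norm ((\<integral>w. indicator ?A w * indicator {w. w j = \<sigma>} w \<partial>?\<mu> i)
      - (\<integral>w. indicator ?A w * gamma_kernel \<phi> j \<sigma> w \<partial>?\<mu> i) - 0) < e"
    unfolding eventually_sequentially[symmetric]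
  proof eventually_elim
    case (elim i)
    interpret prob_space "?\<mu> i" by (rule prob_space_distr_shiftz_pow[OF prob_space_mu0[OF \<nu>] sets_mu0])
    have "integrable (?\<mu> i) (\<lambda>w. indicator ?A w * gamma_approx \<phi> j \<sigma> i w)"
    proof (rule integrable_continuous_map_Xz[OF finite_measure_axioms, where B = 1])
      show "\<bar>indicator ?A w * gamma_approx \<phi> j \<sigma> i w\<bar> \<le> 1" for w
        by (rule abs_mult_le_if_le_1)
          (simp_all add: indicator_def gamma_approx_le_1 less_imp_le[OF gamma_approx_pos])
    qed (simp_all add: continuous_map_real_mult continuous_map_indicator_cylinder_Xz J(1)
        continuous_map_gamma_approx \<phi>)
    moreover have "integrable (?\<mu> i) (\<lambda>w. indicator ?A w * gamma_kernel \<phi> j \<sigma> w)"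
    proof (rule integrable_continuous_map_Xz[OF finite_measure_axioms, where B = 1])
      show "\<bar>indicator ?A w * gamma_kernel \<phi> j \<sigma> w\<bar> \<le> 1" for w
        by (rule abs_mult_le_if_le_1)
          (simp_all add: indicator_def gamma_kernel_le_1[OF ext] less_imp_le[OF gamma_kernel_pos[OF ext]])
    qed (simp_all add: continuous_map_real_mult continuous_map_indicator_cylinder_Xz J(1)
        continuous_map_gamma_kernel \<phi> ext)
    moreover have "\<bar>indicator ?A w * gamma_approx \<phi> j \<sigma> i w - indicator ?A w * gamma_kernel \<phi> j \<sigma> w\<bar>
        \<le> e / 2" for w
      using elim(2) \<open>e > 0\<close> by (auto simp: indicator_def less_imp_le)
    ultimately have "\<bar>(\<integral>w. indicator ?A w * gamma_approx \<phi> j \<sigma> i w \<partial>?\<mu> i)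
        - (\<integral>w. indicator ?A w * gamma_kernel \<phi> j \<sigma> w \<partial>?\<mu> i)\<bar> \<le> e / 2"
      by (rule abs_integral_diff_le)
    moreover have "(\<integral>w. indicator ?A w * indicator {w. w j = \<sigma>} w \<partial>?\<mu> i)
        = (\<integral>w. indicator ?A w * gamma_approx \<phi> j \<sigma> i w \<partial>?\<mu> i)"
      using elim(1) by (intro integral_distr_shiftz_pow_mu0_site[OF hg \<phi> J]) auto
    ultimately show ?case using \<open>e > 0\<close> by simp
  qed
qed

lemma integral_cylinder_site_weak_star_limit:
  fixes \<phi> :: "(nat \<Rightarrow> 'e::finite) \<Rightarrow> real"
  assumes hg: "half_line_gibbs \<phi> \<nu>" and \<phi>: "continuous_map Xp_top euclideanreal \<phi>"
    and ext: "extensible \<phi>" and lim: "weak_star_limit_point_avg \<mu> (mu0 \<nu>)"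
    and J: "finite J" "j \<notin> J"
  shows "(\<integral>w. indicator {x. \<forall>t\<in>J. x t \<in> V t} w * indicator {w. w j = \<sigma>} w \<partial>\<mu>)
       = (\<integral>w. indicator {x. \<forall>t\<in>J. x t \<in> V t} w * gamma_kernel \<phi> j \<sigma> w \<partial>\<mu>)"
proof (rule weak_star_limit_point_avg_integral_eq[OF lim])
  show "continuous_map Xz_top euclideanreal
      (\<lambda>w. indicator {x. \<forall>t\<in>J. x t \<in> V t} w * indicator {w. w j = \<sigma>} w :: real)"
    by (intro continuous_map_real_mult continuous_map_indicator_cylinder_Xz
        continuous_map_indicator_site_Xz J(1))
  show "continuous_map Xz_top euclideanreal
      (\<lambda>w. indicator {x. \<forall>t\<in>J. x t \<in> V t} w * gamma_kernel \<phi> j \<sigma> w)"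
    by (intro continuous_map_real_mult continuous_map_indicator_cylinder_Xz
        continuous_map_gamma_kernel \<phi> ext J(1))
qed (rule cesaro_mean_tendsto_0[OF shifted_mu0_site_minus_gamma_kernel_tendsto_0[OF hg \<phi> ext J]])

definition site_compl_generator :: "int \<Rightarrow> (int \<Rightarrow> 'e) set set"
  where "site_compl_generator j = {(\<lambda>x. restrict x (- {j})) -` B \<inter> UNIV | B.
    B \<in> prod_algebra (- {j}) (\<lambda>_. count_space UNIV)}"

lemma sets_site_compl_algebra:
  "sets (site_compl_algebra j :: (int \<Rightarrow> 'e) measure) = sigma_sets UNIV (site_compl_generator j)"
proof -
  let ?r = "\<lambda>x :: int \<Rightarrow> 'e. restrict x (- {j})"
  let ?M = "PiM (- {j}) (\<lambda>_. count_space (UNIV :: 'e set))"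
  have r: "?r \<in> UNIV \<rightarrow> space ?M" by (auto simp: space_PiM)
  have "sets (site_compl_algebra j :: (int \<Rightarrow> 'e) measure) = {?r -` A \<inter> UNIV | A. A \<in> sets ?M}"
    unfolding site_compl_algebra_def using sets_vimage_algebra2[OF r[unfolded space_Xz[symmetric]]]
    by simp
  also have "\<dots> = {?r -` A \<inter> UNIV | A. A \<in> sigma_sets (space ?M) (prod_algebra (- {j}) (\<lambda>_. count_space UNIV))}"
    by (simp add: sets_PiM space_PiM)
  also have "\<dots> = sigma_sets UNIV (site_compl_generator j)"
    unfolding site_compl_generator_def by (rule sigma_sets_vimage_commute[OF r])
  finally show ?thesis .
qed

lemma Int_stable_site_compl_generator: "Int_stable (site_compl_generator j :: (int \<Rightarrow> 'e) set set)"
proof (rule Int_stableI)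
  fix a b :: "(int \<Rightarrow> 'e) set"
  assume "a \<in> site_compl_generator j" "b \<in> site_compl_generator j"
  then obtain B1 B2 :: "(int \<Rightarrow> 'e) set" where B: "B1 \<in> prod_algebra (- {j}) (\<lambda>_. count_space UNIV)"
    "B2 \<in> prod_algebra (- {j}) (\<lambda>_. count_space UNIV)"
    and ab: "a = (\<lambda>x. restrict x (- {j})) -` B1 \<inter> UNIV" "b = (\<lambda>x. restrict x (- {j})) -` B2 \<inter> UNIV"
    unfolding site_compl_generator_def by blast
  have "B1 \<inter> B2 \<in> prod_algebra (- {j}) (\<lambda>_. count_space UNIV)"
    using Int_stable_prod_algebra B unfolding Int_stable_def by blast
  moreover have "a \<inter> b = (\<lambda>x. restrict x (- {j})) -` (B1 \<inter> B2) \<inter> UNIV" using ab by auto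
  ultimately show "a \<inter> b \<in> site_compl_generator j" unfolding site_compl_generator_def by blast
qed

lemma site_compl_generatorE:
  assumes "S \<in> site_compl_generator j"
  obtains J E where "finite J" "j \<notin> J" "S = {x. \<forall>t\<in>J. x t \<in> E t}"
proof -
  from assms obtain B where "B \<in> prod_algebra (- {j}) (\<lambda>_. count_space UNIV)"
    and S: "S = (\<lambda>x. restrict x (- {j})) -` B \<inter> UNIV"
    unfolding site_compl_generator_def by blast
  from prod_algebraE[OF this(1)] obtain J E
    where B: "B = prod_emb (- {j}) (\<lambda>_. count_space UNIV) J (PiE J E)" and J: "finite J" "J \<subseteq> - {j}"
    by metis
  have "S = {x. \<forall>t\<in>J. x t \<in> E t}"
    unfolding S B prod_emb_PiE_count_space[OF J(2)] using J(2) by auto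
  with J that show thesis by blast
qed

lemma subalgebra_site_compl_algebra:
  assumes "sets \<mu> = sets (Xz :: (int \<Rightarrow> 'e) measure)"
  shows "subalgebra \<mu> (site_compl_algebra j)"
proof -
  have "sets (site_compl_algebra j) \<subseteq> sets (Xz :: (int \<Rightarrow> 'e) measure)"
    unfolding site_compl_algebra_def
    by (rule sets_image_in_sets) (auto simp: Xz_def intro: measurable_restrict_subset)
  then show ?thesis
    using assms sets_eq_imp_space_eq[OF assms] by (simp add: subalgebra_def site_compl_algebra_def)
qed

lemma gamma_kernel_measurable_site_compl_algebra:
  fixes \<phi> :: "(nat \<Rightarrow> 'e::finite) \<Rightarrow> real"
  assumes "continuous_map Xp_top euclideanreal \<phi>" and "extensible \<phi>"
  shows "gamma_kernel \<phi> j \<sigma> \<in> borel_measurable (site_compl_algebra j)"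
proof -
  let ?fill = "\<lambda>y :: int \<Rightarrow> 'e. \<lambda>t. if t = j then \<sigma> else y t"
  have fill: "?fill \<in> measurable (PiM (- {j}) (\<lambda>_. count_space UNIV)) Xz"
  proof (intro measurable_Xz_componentwise)
    fix k
    show "(\<lambda>y. ?fill y k) \<in> PiM (- {j}) (\<lambda>_. count_space UNIV) \<rightarrow>\<^sub>M count_space UNIV"
      by (cases "k = j") (auto intro!: measurable_component_singleton)
  qed
  have restrict: "(\<lambda>x. restrict x (- {j})) \<in> measurable (site_compl_algebra j) (PiM (- {j}) (\<lambda>_. count_space UNIV))"
    unfolding site_compl_algebra_def by (rule measurable_vimage_algebra1) (auto simp: space_PiM)
  have "(\<lambda>w. gamma_kernel \<phi> j \<sigma> (?fill (restrict w (- {j})))) \<in> borel_measurable (site_compl_algebra j)"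
    using measurable_comp[OF restrict measurable_comp[OF fill
        borel_measurable_Xz_continuous[OF continuous_map_gamma_kernel[OF assms]]]]
    by (simp add: o_def)
  moreover have "gamma_kernel \<phi> j \<sigma> (?fill (restrict w (- {j}))) = gamma_kernel \<phi> j \<sigma> w" for w
  proof -
    have "?fill (restrict w (- {j})) = w(j := \<sigma>)" by auto
    then show ?thesis by (simp add: gamma_kernel_def)
  qed
  ultimately show ?thesis by simp
qed

lemma set_integral_site_eq_gamma_kernel:
  fixes \<phi> :: "(nat \<Rightarrow> 'e::finite) \<Rightarrow> real"
  assumes hg: "half_line_gibbs \<phi> \<nu>" and \<phi>: "continuous_map Xp_top euclideanreal \<phi>"
    and ext: "extensible \<phi>" and lim: "weak_star_limit_point_avg \<mu> (mu0 \<nu>)"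
    and A: "A \<in> sets (site_compl_algebra j)"
  shows "(LINT w:A|\<mu>. indicator {w. w j = \<sigma>} w) = (LINT w:A|\<mu>. gamma_kernel \<phi> j \<sigma> w)"
proof -
  interpret prob_space \<mu> by (rule weak_star_limit_point_avgD(1)[OF lim])
  note sets = weak_star_limit_point_avgD(2)[OF lim]
  have space: "space \<mu> = UNIV" using sets_eq_imp_space_eq[OF sets] by simp
  have cylinder: "(LINT w:{x. \<forall>t\<in>J. x t \<in> E t}|\<mu>. indicator {w. w j = \<sigma>} w)
      = (LINT w:{x. \<forall>t\<in>J. x t \<in> E t}|\<mu>. gamma_kernel \<phi> j \<sigma> w)" if "finite J" "j \<notin> J" for J E
    using integral_cylinder_site_weak_star_limit[OF hg \<phi> ext lim that]
    by (simp add: set_lebesgue_integral_def)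
  show ?thesis
  proof (rule set_integral_eq_sigma_sets[where G = "site_compl_generator j"])
    show "integrable \<mu> (indicator {w. w j = \<sigma>} :: _ \<Rightarrow> real)"
      by (rule integrable_continuous_map_Xz[OF finite_measure_axioms sets continuous_map_indicator_site_Xz,
          where B = 1]) simp
    show "integrable \<mu> (gamma_kernel \<phi> j \<sigma>)"
      using gamma_kernel_pos[OF ext] gamma_kernel_le_1[OF ext]
      by (intro integrable_continuous_map_Xz[OF finite_measure_axioms sets continuous_map_gamma_kernel[OF \<phi> ext],
          where B = 1]) (simp add: less_imp_le)
    show "sigma_sets (space \<mu>) (site_compl_generator j) \<subseteq> sets \<mu>"
      using subalgebra_site_compl_algebra[OF sets, of j]
      by (simp add: space sets_site_compl_algebra[symmetric] subalgebra_def)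
    show "(\<integral>w. indicator {w. w j = \<sigma>} w \<partial>\<mu>) = (\<integral>w. gamma_kernel \<phi> j \<sigma> w \<partial>\<mu>)"
      using cylinder[of "{}"] by (simp add: set_lebesgue_integral_def)
    show "A \<in> sigma_sets (space \<mu>) (site_compl_generator j)"
      using A by (simp add: space sets_site_compl_algebra)
  qed (auto simp: Int_stable_site_compl_generator space elim!: site_compl_generatorE intro: cylinder)
qed

lemma gibbs_whole_line_weak_star_limit_point_avg:
  fixes \<phi> :: "(nat \<Rightarrow> 'e::finite) \<Rightarrow> real"
  assumes hg: "half_line_gibbs \<phi> \<nu>" and \<phi>: "continuous_map Xp_top euclideanreal \<phi>"
    and ext: "extensible \<phi>" and lim: "weak_star_limit_point_avg \<mu> (mu0 \<nu>)"
  shows "gibbs_whole_line \<phi> \<mu>"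
  unfolding gibbs_whole_line_def
proof (intro conjI allI)
  interpret prob_space \<mu> by (rule weak_star_limit_point_avgD(1)[OF lim])
  show "prob_space \<mu>" "sets \<mu> = sets Xz" using weak_star_limit_point_avgD[OF lim] by auto
  note sets = weak_star_limit_point_avgD(2)[OF lim]
  fix j \<sigma>
  have sub: "subalgebra \<mu> (site_compl_algebra j)" by (rule subalgebra_site_compl_algebra[OF sets])
  interpret finite_measure_subalgebra \<mu> "restr_to_subalg \<mu> (site_compl_algebra j)"
    by unfold_locales (rule subalgebra_restr_to_subalg[OF sub])
  show "AE w in \<mu>. real_cond_exp \<mu> (restr_to_subalg \<mu> (site_compl_algebra j)) (indicator {x. x j = \<sigma>}) w
      = gamma_kernel \<phi> j \<sigma> w"
  proof (rule real_cond_exp_charact)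
    show "(LINT x:A|\<mu>. indicator {x. x j = \<sigma>} x) = (LINT x:A|\<mu>. gamma_kernel \<phi> j \<sigma> x)"
      if "A \<in> sets (restr_to_subalg \<mu> (site_compl_algebra j))" for A
      using that by (intro set_integral_site_eq_gamma_kernel[OF hg \<phi> ext lim])
        (simp add: sets_restr_to_subalg[OF sub])
    show "gamma_kernel \<phi> j \<sigma> \<in> borel_measurable (restr_to_subalg \<mu> (site_compl_algebra j))"
      using gamma_kernel_measurable_site_compl_algebra[OF \<phi> ext]
      by (simp add: measurable_cong_sets[OF sets_restr_to_subalg[OF sub] refl])
    show "integrable \<mu> (indicator {x. x j = \<sigma>} :: _ \<Rightarrow> real)"
      by (rule integrable_continuous_map_Xz[OF finite_measure_axioms sets continuous_map_indicator_site_Xz,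
          where B = 1]) simp
    show "integrable \<mu> (gamma_kernel \<phi> j \<sigma>)"
      using gamma_kernel_pos[OF ext] gamma_kernel_le_1[OF ext]
      by (intro integrable_continuous_map_Xz[OF finite_measure_axioms sets continuous_map_gamma_kernel[OF \<phi> ext],
          where B = 1]) (simp add: less_imp_le)
  qed
qed

theorem theoremB:
  fixes \<phi> :: "(nat \<Rightarrow> 'e::finite) \<Rightarrow> real"
    and \<nu> :: "(nat \<Rightarrow> 'e) measure"
    and \<mu> :: "(int \<Rightarrow> 'e) measure"
  assumes "continuous_map Xp_top euclideanreal \<phi>"
    and "extensible \<phi>"
    and "half_line_gibbs \<phi> \<nu>"
    and "weak_star_limit_point_avg \<mu> (mu0 \<nu>)"
  shows "translation_invariant \<mu> \<and> gibbs_whole_line \<phi> \<mu>"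
proof
  note \<nu> = half_line_gibbsD[OF assms(3)]
  show "translation_invariant \<mu>"
    by (rule translation_invariant_weak_star_limit_point_avg[OF assms(4) prob_space_mu0[OF \<nu>] sets_mu0])
  show "gibbs_whole_line \<phi> \<mu>"
    by (rule gibbs_whole_line_weak_star_limit_point_avg[OF assms(3,1,2,4)])
qed

end
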